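(* Assume that $(\hat R,\hat F)$ satisfies conditions (i), (ii), (iii) and (iv), and let $M$ be a half-quantum matrix. Then \[ (M_{\overline{1\to n}})^{a_1\dots a_n}_{b_1\dots b_n}\,\epsilon^{b_1\dots b_n}=\det\nolimits_q(M)\,\epsilon^{a_1\dots a_n}, \] and consequently $\tilde M^{\wedge n}=\det_q(M)\,\mathcal D$.
   Context: Let $V$ be a finite-dimensional complex vector space, $\mathrm{Id}$ the identity, $P$ the flip on $V\otimes V$. For an operator $X$ on $V$ (possibly with entries in an associative algebra $\mathfrak A$), $X_j$ denotes $X$ acting in the $j$-th tensor factor of $V^{\otimes m}$; for $Y$ on $V\otimes V$, $Y_{j,k}$ denotes $Y$ in factors $j,k$ and $Y_j:=Y_{j,j+1}$. $\mathrm{tr}_{(i_1,\dots,i_k)}$ is the partial trace over the listed factors. $j_q:=q^{j-1}+q^{j-3}+\dots+q^{-j+1}$; $j$ is $q$-admissible if $k_q\ne0$ for $k=1,\dots,j$. Upper indices are row indices and lower indices column indices; summation over repeated indices is implied. Let $q\in\mathbb C^*$, $\hat R,\hat F\in\mathrm{Aut}(V\otimes V)$. Conditions: (i) $\hat R_{12}\hat R_{23}\hat R_{12}=\hat R_{23}\hat R_{12}\hat R_{23}$, $\hat F_{12}\hat F_{23}\hat F_{12}=\hat F_{23}\hat F_{12}\hat F_{23}$, $\hat R_{12}\hat F_{23}\hat F_{12}=\hat F_{23}\hat F_{12}\hat R_{23}$, $\hat F_{12}\hat F_{23}\hat R_{12}=\hat R_{23}\hat F_{12}\hat F_{23}$.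 (ii) $2$ is $q$-admissible and $\hat R=qS^{(2)}-q^{-1}A^{(2)}$ with $S^{(2)},A^{(2)}$ idempotents, $S^{(2)}+A^{(2)}=\mathrm{Id}$. Higher $q$-antisymmetrizers: $A^{(1)}=\mathrm{Id}$ and for $k+1$ $q$-admissible $(k+1)_qA^{(k+1)}:=A^{(k)}(q^k\mathrm{Id}-k_q\hat R_k)A^{(k)}$. (iii) ($\hat R$ even of height $n$) $n$ is $q$-admissible, $\mathrm{rank}\,A^{(n)}=1$, and $A^{(n)}(q^n\mathrm{Id}-n_q\hat R_n)A^{(n)}=0$. (iv) there is $\Psi\in\mathrm{Aut}(V\otimes V)$ with $\mathrm{tr}_{(2)}(\Psi_{12}\hat F_{23})=P_{13}$. Quantum trace: $D_1:=\mathrm{tr}_{(2)}(\Psi_{12})$, $\mathrm{tr}_{F,(i_1,\dots,i_k)}(X):=\mathrm{tr}_{(i_1,\dots,i_k)}(D_{i_1}\cdots D_{i_k}X)$. Under (iii), there are tensors $\epsilon^{a_1\dots a_n}$, $\epsilon_{a_1\dots a_n}$ with $(A^{(n)})^{b_1\dots b_n}_{a_1\dots a_n}=\epsilon^{b_1\dots b_n}\epsilon_{a_1\dots a_n}$ and $\epsilon_{a_1\dots a_n}\epsilon^{a_1\dots a_n}=1$. For an $\mathfrak A$-valued $M$ on $V$: $M_{\bar1}:=M_1$, $M_{\overline{k+1}}:=\hat F_kM_{\bar k}\hat F_k^{-1}$, $M_{\overline{1\to k}}:=M_{\bar1}\cdots M_{\bar k}$. A half-quantum matrix is an $\mathfrak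 A$-valued $M$ with $S^{(2)}_{12}M_{\bar1}M_{\bar2}A^{(2)}_{12}=0$. Its quantum determinant is $\det_q(M):=\epsilon_{a_1\dots a_n}(M_{\overline{1\to n}})^{a_1\dots a_n}_{b_1\dots b_n}\epsilon^{b_1\dots b_n}\in\mathfrak A$. $(\tilde M^{\wedge n})_1:=\mathrm{tr}_{F,(2,\dots,n)}(M_{\overline{1\to n}}A^{(n)})$ and $\mathcal D\in\mathrm{End}(V)$ is defined by $\mathcal D_1:=\mathrm{tr}_{F,(2,\dots,n)}(A^{(n)})$. *)

theory Defs
  imports Complex_Main
begin

text \<open>V has basis indexed by 0,...,N-1 (N = dim V).
An operator on the m-fold tensor power of V is a function X taking a row multi-index
a and a column multi-index b (lists of length m with entries < N) to the matrix
entry X^a_b. Only its values on idx m N matter. Tensor factors (positions) are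
numbered 1,...,m as in the paper.\<close>

type_synonym 'a op = "nat list \<Rightarrow> nat list \<Rightarrow> 'a"

definition idx :: "nat \<Rightarrow> nat \<Rightarrow> nat list set" where
  "idx m N = {xs. length xs = m \<and> set xs \<subseteq> {..<N}}"

definition opeq :: "nat \<Rightarrow> nat \<Rightarrow> 'a op \<Rightarrow> 'a op \<Rightarrow> bool" where
  "opeq N m X Y \<longleftrightarrow> (\<forall>a\<in>idx m N. \<forall>b\<in>idx m N. X a b = Y a b)"

definition idop :: "'a::{zero,one} op" where
  "idop a b = (if a = b then 1 else 0)"

text \<open>Y acting in the tensor factors ps (listed in the order of Y's own factors),
identity in all other factors.\<close>
definition emb :: "nat list \<Rightarrow> 'a::zero op \<Rightarrow> 'a op" where
  "emb ps Y a b = (if \<forall>i<length a. Suc i \<notin> set ps \<longrightarrow> a ! i = b ! i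
      then Y (map (\<lambda>p. a ! (p - 1)) ps) (map (\<lambda>p. b ! (p - 1)) ps) else 0)"

definition mmul :: "nat \<Rightarrow> nat \<Rightarrow> 'a::semiring_0 op \<Rightarrow> 'a op \<Rightarrow> 'a op" where
  "mmul N m X Y a b = (\<Sum>c\<in>idx m N. X a c * Y c b)"

definition lsmul :: "(complex \<Rightarrow> 'a \<Rightarrow> 'a) \<Rightarrow> nat \<Rightarrow> nat \<Rightarrow> complex op \<Rightarrow> 'a::ab_group_add op \<Rightarrow> 'a op" where
  "lsmul sm N m C X a b = (\<Sum>c\<in>idx m N. sm (C a c) (X c b))"

definition rsmul :: "(complex \<Rightarrow> 'a \<Rightarrow> 'a) \<Rightarrow> nat \<Rightarrow> nat \<Rightarrow> 'a::ab_group_add op \<Rightarrow> complex op \<Rightarrow> 'a op" where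
  "rsmul sm N m X C a b = (\<Sum>c\<in>idx m N. sm (C c b) (X a c))"

definition calg :: "(complex \<Rightarrow> 'a::ring \<Rightarrow> 'a) \<Rightarrow> bool" where
  "calg sm \<longleftrightarrow> (\<forall>c d x y. sm c (x + y) = sm c x + sm c y \<and> sm (c + d) x = sm c x + sm d x
      \<and> sm (c * d) x = sm c (sm d x) \<and> sm 1 x = x
      \<and> sm c (x * y) = sm c x * y \<and> sm c (x * y) = x * sm c y)"

text \<open>Partial trace. fill m 1 ps a c is the length-m multi-index carrying the entries
of c at the positions in ps and the entries of a at the other positions (in order).\<close>
fun fill :: "nat \<Rightarrow> nat \<Rightarrow> nat set \<Rightarrow> nat list \<Rightarrow> nat list \<Rightarrow> nat list" where
  "fill 0 j ps a c = []"
| "fill (Suc k) j ps a c = (if j \<in> ps then hd c # fill k (Suc j) ps a (tl c)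
                             else hd a # fill k (Suc j) ps (tl a) c)"

definition ptr :: "nat \<Rightarrow> nat \<Rightarrow> nat set \<Rightarrow> 'a::comm_monoid_add op \<Rightarrow> 'a op" where
  "ptr N m ps X a b = (\<Sum>c\<in>idx (card ps) N. X (fill m 1 ps a c) (fill m 1 ps b c))"

definition qnum :: "nat \<Rightarrow> complex \<Rightarrow> complex" where
  "qnum j q = (\<Sum>i<j. q powi (int j - 1 - 2 * int i))"

definition qadm :: "nat \<Rightarrow> complex \<Rightarrow> bool" where
  "qadm j q \<longleftrightarrow> (\<forall>k\<in>{1..j}. qnum k q \<noteq> 0)"

text \<open>q-antisymmetrizers. asym_step N q R k Ak = A^(k) (q^k Id - k_q R_k) A^(k)
on the (k+1)-fold tensor power, where Ak is A^(k).\<close>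
definition asym_step :: "nat \<Rightarrow> complex \<Rightarrow> complex op \<Rightarrow> nat \<Rightarrow> complex op \<Rightarrow> complex op" where
  "asym_step N q R k Ak =
     mmul N (Suc k) (mmul N (Suc k) (emb [1..<Suc k] Ak)
        (\<lambda>a b. q ^ k * idop a b - qnum k q * emb [k, Suc k] R a b)) (emb [1..<Suc k] Ak)"

fun asym :: "nat \<Rightarrow> complex \<Rightarrow> complex op \<Rightarrow> nat \<Rightarrow> complex op" where
  "asym N q R 0 = idop"
| "asym N q R (Suc 0) = idop"
| "asym N q R (Suc (Suc k)) =
     (\<lambda>a b. asym_step N q R (Suc k) (asym N q R (Suc k)) a b / qnum (Suc (Suc k)) q)"

fun Mbar :: "(complex \<Rightarrow> 'a \<Rightarrow> 'a) \<Rightarrow> nat \<Rightarrow> nat \<Rightarrow> complex op \<Rightarrow> complex op \<Rightarrow> 'a::ab_group_add op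
               \<Rightarrow> nat \<Rightarrow> 'a op" where
  "Mbar sm N m F Finv M 0 = emb [1] M"
| "Mbar sm N m F Finv M (Suc 0) = emb [1] M"
| "Mbar sm N m F Finv M (Suc (Suc k)) =
     lsmul sm N m (emb [Suc k, Suc (Suc k)] F)
       (rsmul sm N m (Mbar sm N m F Finv M (Suc k)) (emb [Suc k, Suc (Suc k)] Finv))"

fun Mprod :: "(complex \<Rightarrow> 'a \<Rightarrow> 'a) \<Rightarrow> nat \<Rightarrow> nat \<Rightarrow> complex op \<Rightarrow> complex op \<Rightarrow> 'a::ring op
               \<Rightarrow> nat \<Rightarrow> 'a op" where
  "Mprod sm N m F Finv M 0 = Mbar sm N m F Finv M 1"
| "Mprod sm N m F Finv M (Suc 0) = Mbar sm N m F Finv M 1"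
| "Mprod sm N m F Finv M (Suc (Suc k)) =
     mmul N m (Mprod sm N m F Finv M (Suc k)) (Mbar sm N m F Finv M (Suc (Suc k)))"

definition dprod :: "nat \<Rightarrow> nat \<Rightarrow> complex op \<Rightarrow> nat list \<Rightarrow> complex op" where
  "dprod N m D ps = foldr (\<lambda>i Y. mmul N m (emb [i] D) Y) ps idop"

definition flip :: "complex op" where
  "flip a b = (if a ! 0 = b ! 1 \<and> a ! 1 = b ! 0 then 1 else 0)"

definition invertible_op :: "nat \<Rightarrow> nat \<Rightarrow> complex op \<Rightarrow> bool" where
  "invertible_op N m X \<longleftrightarrow> (\<exists>Y. opeq N m (mmul N m X Y) idop \<and> opeq N m (mmul N m Y X) idop)"

end

theory Submission
  imports Defs
begin

text \<open>
  The q-antisymmetrizers A^(k), built by the recursion of Defs from the Hecke and braid relations,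
  are idempotent and satisfy R_i A^(k) = -q^-1 A^(k) for i < k. Hence A_i A^(n) = A^(n), and
  conversely A^(n) fixes every Y with S_i Y = 0 for all i < n, because such Y satisfy
  R_i Y = -q^-1 Y.

  The mixed braid relations make F_i and R_i commute with M_bar_j whenever the factors i, i+1
  do not meet j, j+1, and they let F_i F_(i+1) conjugate M_bar_i M_bar_(i+1) into
  M_bar_(i+1) M_bar_(i+2). So the half-quantum relation S_1 M_bar_1 M_bar_2 A_1 = 0 spreads to
  S_i M_bar_i M_bar_(i+1) A_i = 0 and then to S_i M_bar_(1->n) A_i = 0 for all i < n.
  Consequently Y = M_bar_(1->n) A^(n) = M_bar_(1->n) A_i A^(n) is annihilated by every S_i and is
  fixed by A^(n). As A^(n) = eps^. eps_. has rank one, this forces Y = det_q(M) A^(n): reading off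
  a column gives the first claim, and a partial trace of D_2 ... D_n Y gives the second.
\<close>

declare upt_Suc[simp del]

section \<open>Multi-indices\<close>

text \<open>Factor positions are 1-based, as in Defs: subidx ps a reads the entries of a at the
  positions ps, and setidx a ps d overwrites them by d. Sums over the multi-indices that agree
  with a off ps are reindexed by setidx a ps (sum_emb_left).\<close>

definition subidx :: "nat list \<Rightarrow> nat list \<Rightarrow> nat list" where
  "subidx ps a = map (\<lambda>p. a ! (p - 1)) ps"

fun setidx :: "nat list \<Rightarrow> nat list \<Rightarrow> nat list \<Rightarrow> nat list" where
  "setidx a [] d = a"
| "setidx a (p # ps) d = (setidx a ps (tl d))[p - 1 := hd d]"

definition valid_pos :: "nat \<Rightarrow> nat list \<Rightarrow> bool" where
  "valid_pos m ps \<longleftrightarrow> distinct ps \<and> set ps \<subseteq> {1..m}"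

lemma length_subidx[simp]: "length (subidx ps a) = length ps"
  by (simp add: subidx_def)

lemma length_setidx[simp]: "length (setidx a ps d) = length a"
  by (induction ps arbitrary: d) auto

lemma setidx_nth_other: "Suc i \<notin> set ps \<Longrightarrow> 0 \<notin> set ps \<Longrightarrow> setidx a ps d ! i = a ! i"
proof (induction ps arbitrary: d)
  case Nil then show ?case by simp
next
  case (Cons p ps)
  then have "i \<noteq> p - 1" by (cases p) auto
  with Cons show ?case by simp
qed

lemma setidx_subidx_nth: "Suc i \<in> set ps \<Longrightarrow> i < length a \<Longrightarrow> setidx a ps (subidx ps c) ! i = c ! i"
proof (induction ps)
  case Nil then show ?case by simp
next
  case (Cons p ps)
  show ?case
  proof (cases "i = p - 1")
    case True
    then show ?thesis using Cons.prems by (simp add: subidx_def)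
  next
    case False
    then have "Suc i \<in> set ps" using Cons.prems by auto
    then show ?thesis using Cons False by (simp add: subidx_def)
  qed
qed

lemma subidx_setidx: "distinct ps \<Longrightarrow> 0 \<notin> set ps \<Longrightarrow> \<forall>p\<in>set ps. p \<le> length a \<Longrightarrow> length d = length ps
   \<Longrightarrow> subidx ps (setidx a ps d) = d"
proof (induction ps arbitrary: d)
  case Nil then show ?case by (simp add: subidx_def)
next
  case (Cons p ps)
  then obtain x d' where d: "d = x # d'" by (cases d) auto
  have p1: "p - 1 < length a" using Cons.prems by (cases p) auto
  have "subidx ps ((setidx a ps d')[p - 1 := x]) = subidx ps (setidx a ps d')"
    unfolding subidx_def
  proof (rule map_cong[OF refl])
    fix p' assume "p' \<in> set ps"
    have "p' \<noteq> p" using \<open>p' \<in> set ps\<close> Cons.prems(1) by auto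
    moreover have "p' \<noteq> 0"
    proof
      assume "p' = 0" then show False using \<open>p' \<in> set ps\<close> Cons.prems(2) by simp
    qed
    moreover have "p \<noteq> 0" using Cons.prems(2) by auto
    ultimately have "p' - 1 \<noteq> p - 1" by arith
    then show "(setidx a ps d')[p - 1 := x] ! (p' - 1) = setidx a ps d' ! (p' - 1)" by simp
  qed
  also have "\<dots> = d'" using Cons d by auto
  finally show ?case using d p1 by (simp add: subidx_def)
qed

lemma setidx_in_idx: "a \<in> idx m N \<Longrightarrow> d \<in> idx (length ps) N \<Longrightarrow> setidx a ps d \<in> idx m N"
proof (induction ps arbitrary: d)
  case Nil then show ?case by simp
next
  case (Cons p ps)
  then obtain x d' where d: "d = x # d'" by (cases d) (auto simp: idx_def)
  with Cons.prems have "d' \<in> idx (length ps) N" "x < N" by (auto simp: idx_def)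
  with Cons.IH[OF Cons.prems(1)] have "setidx a ps d' \<in> idx m N" by auto
  then show ?case using d \<open>x < N\<close> by (auto simp: idx_def dest!: set_update_subset_insert[THEN subsetD])
qed

lemma subidx_in_idx:
  assumes a: "a \<in> idx m N" and ps: "set ps \<subseteq> {1..m}"
  shows "subidx ps a \<in> idx (length ps) N"
proof -
  have "x < N" if "x \<in> set (subidx ps a)" for x
  proof -
    from that obtain p where p: "p \<in> set ps" "x = a ! (p - 1)" by (auto simp: subidx_def)
    then have "p - 1 < length a" using a ps by (force simp: idx_def)
    then show "x < N" using p a by (auto simp: idx_def dest!: nth_mem)
  qed
  then show ?thesis by (auto simp: idx_def)
qed

lemma setidx_subidx:
  assumes "length c = length a" "\<forall>i<length a. Suc i \<notin> set ps \<longrightarrow> a ! i = c ! i" "0 \<notin> set ps"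
  shows "setidx a ps (subidx ps c) = c"
proof (rule nth_equalityI)
  fix i assume "i < length (setidx a ps (subidx ps c))"
  then show "setidx a ps (subidx ps c) ! i = c ! i"
    using assms by (cases "Suc i \<in> set ps") (simp_all add: setidx_subidx_nth setidx_nth_other)
qed (use assms in simp)

lemma bij_betw_setidx:
  assumes a: "a \<in> idx m N" and ps: "valid_pos m ps"
  shows "bij_betw (setidx a ps) (idx (length ps) N)
           {c\<in>idx m N. \<forall>i<length a. Suc i \<notin> set ps \<longrightarrow> a ! i = c ! i}"
proof -
  have la: "length a = m" using a by (simp add: idx_def)
  have pl: "\<forall>p\<in>set ps. p \<le> length a" using ps la by (auto simp: valid_pos_def)
  show ?thesis
  proof (rule bij_betw_byWitness[where f' = "subidx ps"])
    show "\<forall>d\<in>idx (length ps) N. subidx ps (setidx a ps d) = d"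
      using ps pl by (auto simp: valid_pos_def idx_def intro!: subidx_setidx)
    show "\<forall>c\<in>{c\<in>idx m N. \<forall>i<length a. Suc i \<notin> set ps \<longrightarrow> a ! i = c ! i}. setidx a ps (subidx ps c) = c"
      using ps la by (auto simp: valid_pos_def idx_def intro!: setidx_subidx)
    show "setidx a ps ` idx (length ps) N \<subseteq> {c\<in>idx m N. \<forall>i<length a. Suc i \<notin> set ps \<longrightarrow> a ! i = c ! i}"
      using a ps by (auto simp: valid_pos_def intro!: setidx_in_idx setidx_nth_other[symmetric])
    show "subidx ps ` {c\<in>idx m N. \<forall>i<length a. Suc i \<notin> set ps \<longrightarrow> a ! i = c ! i} \<subseteq> idx (length ps) N"
      using ps by (auto simp: valid_pos_def intro!: subidx_in_idx)
  qed
qed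

lemma finite_idx[simp]: "finite (idx m N)"
proof -
  have eq: "idx m N = {xs. set xs \<subseteq> {..<N} \<and> length xs = m}" by (auto simp: idx_def)
  show ?thesis unfolding eq by (rule finite_lists_length_eq) simp
qed

lemma length_idx[simp]: "c \<in> idx m N \<Longrightarrow> length c = m"
  by (simp add: idx_def)

lemma idx_Cons: "i < N \<Longrightarrow> c \<in> idx k N \<Longrightarrow> i # c \<in> idx (Suc k) N"
  unfolding idx_def by simp

lemma fill_id: "(\<forall>t. j \<le> t \<and> t < j + k \<longrightarrow> t \<in> S) \<Longrightarrow> length c = k \<Longrightarrow> fill k j S a c = c"
proof (induction k arbitrary: j a c)
  case 0 then show ?case by simp
next
  case (Suc k)
  then obtain x c' where c: "c = x # c'" by (cases c) auto
  have "j \<in> S" using Suc.prems by auto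
  moreover have "fill k (Suc j) S a c' = c'" using Suc.prems c by (intro Suc.IH) auto
  ultimately show ?case using c by simp
qed

lemma fill_tail: "length c = k \<Longrightarrow> fill k (Suc (Suc 0)) {2..Suc k} a c = c"
  by (rule fill_id) auto

lemma ptr_tail_entry:
  assumes "n = Suc k"
  shows "ptr N n {2..n} X [i] [j] = (\<Sum>c\<in>idx k N. X (i # c) (j # c))"
  unfolding ptr_def assms by (intro sum.cong refl) (simp_all add: fill_tail)

section \<open>Operators on tensor powers\<close>

lemma opeq_refl[simp, intro]: "opeq N m X X" by (simp add: opeq_def)

lemma opeq_sym: "opeq N m X Y \<Longrightarrow> opeq N m Y X" by (simp add: opeq_def)

lemma opeq_trans[trans]: "opeq N m X Y \<Longrightarrow> opeq N m Y Z \<Longrightarrow> opeq N m X Z" by (simp add: opeq_def)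

lemma opeqD: "opeq N m X Y \<Longrightarrow> a \<in> idx m N \<Longrightarrow> b \<in> idx m N \<Longrightarrow> X a b = Y a b" by (simp add: opeq_def)

lemma opeq_add: "opeq N m X X' \<Longrightarrow> opeq N m Y Y' \<Longrightarrow> opeq N m (\<lambda>a b. X a b + Y a b) (\<lambda>a b. X' a b + Y' a b)"
  by (simp add: opeq_def)

lemma opeq_diff: "opeq N m X X' \<Longrightarrow> opeq N m Y Y' \<Longrightarrow> opeq N m (\<lambda>a b. X a b - Y a b) (\<lambda>a b. X' a b - Y' a b)"
  by (simp add: opeq_def)

lemma opeq_scal: "opeq N m X X' \<Longrightarrow> opeq N m (\<lambda>a b. c * X a b) (\<lambda>a b. c * X' a b)"
  by (simp add: opeq_def)

lemma mmul_assoc: "mmul N m (mmul N m X Y) Z = mmul N m X (mmul N m Y (Z :: 'a::semiring_0 op))"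
  unfolding mmul_def fun_eq_iff
  by (simp add: sum_distrib_left sum_distrib_right mult.assoc) (rule allI, rule allI, rule sum.swap)

lemma mmul_cong: "opeq N m X X' \<Longrightarrow> opeq N m Y Y' \<Longrightarrow> opeq N m (mmul N m X Y) (mmul N m X' (Y' :: 'a::semiring_0 op))"
  unfolding opeq_def mmul_def by simp

lemma mmul_idop_l: "opeq N m (mmul N m idop X) (X :: 'a::semiring_1 op)"
proof -
  have "\<And>a b c. idop a c * X c b = (if a = c then X c b else 0)" by (simp add: idop_def)
  then show ?thesis unfolding opeq_def mmul_def by (simp add: sum.delta)
qed

lemma mmul_idop_r: "opeq N m (mmul N m X idop) (X :: 'a::semiring_1 op)"
proof -
  have "\<And>a b c. X a c * idop c b = (if c = b then X a c else 0)" by (simp add: idop_def)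
  then show ?thesis unfolding opeq_def mmul_def by (simp add: sum.delta')
qed

lemma mmul_add_l: "mmul N m (\<lambda>a b. X a b + Y a b) Z = (\<lambda>a b. mmul N m X Z a b + mmul N m Y Z a b :: 'a::semiring_0)"
  by (simp add: mmul_def fun_eq_iff distrib_right sum.distrib)

lemma mmul_add_r: "mmul N m Z (\<lambda>a b. X a b + Y a b) = (\<lambda>a b. mmul N m Z X a b + mmul N m Z Y a b :: 'a::semiring_0)"
  by (simp add: mmul_def fun_eq_iff distrib_left sum.distrib)

lemma mmul_scal_l: "mmul N m (\<lambda>a b. c * X a b) Z = (\<lambda>a b. c * mmul N m X Z a b :: complex)"
  by (simp add: mmul_def fun_eq_iff sum_distrib_left mult.assoc)

lemma mmul_scal_r: "mmul N m Z (\<lambda>a b. c * X a b) = (\<lambda>a b. c * mmul N m Z X a b :: complex)"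
  by (simp add: mmul_def fun_eq_iff sum_distrib_left mult.left_commute)

lemma mmul_zero_l[simp]: "mmul N m (\<lambda>a b. 0) X = (\<lambda>a b. (0::'a::semiring_0))"
  by (simp add: mmul_def fun_eq_iff)

lemma mmul_zero_r[simp]: "mmul N m X (\<lambda>a b. 0) = (\<lambda>a b. (0::'a::semiring_0))"
  by (simp add: mmul_def fun_eq_iff)

lemma mmul_inverse_prod:
  assumes "opeq N m (mmul N m A B) idop" "opeq N m (mmul N m C D) (idop :: complex op)"
  shows "opeq N m (mmul N m (mmul N m C A) (mmul N m B D)) idop"
proof -
  have "opeq N m (mmul N m (mmul N m C A) (mmul N m B D)) (mmul N m C (mmul N m (mmul N m A B) D))"
    by (simp only: mmul_assoc opeq_refl)
  also have "opeq N m \<dots> (mmul N m C (mmul N m idop D))"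
    by (intro mmul_cong assms(1) opeq_refl)
  also have "opeq N m \<dots> (mmul N m C D)"
    by (intro mmul_cong mmul_idop_l opeq_refl)
  also have "opeq N m \<dots> idop" by (rule assms(2))
  finally show ?thesis .
qed

lemma conj_by_inverse:
  assumes XU: "opeq N m (mmul N m X U) (mmul N m U Y)"
    and UV: "opeq N m (mmul N m U V) idop" and VU: "opeq N m (mmul N m V U) (idop :: complex op)"
  shows "opeq N m (mmul N m V X) (mmul N m Y V)"
proof -
  have "opeq N m (mmul N m V X) (mmul N m (mmul N m V X) idop)"
    by (rule opeq_sym[OF mmul_idop_r])
  also have "opeq N m \<dots> (mmul N m (mmul N m V X) (mmul N m U V))"
    by (intro mmul_cong opeq_refl opeq_sym[OF UV])
  also have "opeq N m \<dots> (mmul N m (mmul N m V (mmul N m X U)) V)"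
    by (simp only: mmul_assoc opeq_refl)
  also have "opeq N m \<dots> (mmul N m (mmul N m V (mmul N m U Y)) V)"
    by (intro mmul_cong opeq_refl XU)
  also have "opeq N m \<dots> (mmul N m (mmul N m (mmul N m V U) Y) V)"
    by (simp only: mmul_assoc opeq_refl)
  also have "opeq N m \<dots> (mmul N m (mmul N m idop Y) V)"
    by (intro mmul_cong opeq_refl VU)
  also have "opeq N m \<dots> (mmul N m Y V)"
    by (intro mmul_cong opeq_refl mmul_idop_l)
  finally show ?thesis .
qed

lemma conj_lincomb_idop:
  assumes WX: "opeq N m (mmul N m W X) (mmul N m Y W)"
  shows "opeq N m (mmul N m W (\<lambda>a b. \<alpha> * X a b + \<beta> * idop a b))
                  (mmul N m (\<lambda>a b. \<alpha> * Y a b + \<beta> * idop a b) (W :: complex op))"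
proof -
  have "opeq N m (mmul N m W (\<lambda>a b. \<alpha> * X a b + \<beta> * idop a b))
     (\<lambda>a b. \<alpha> * mmul N m W X a b + \<beta> * mmul N m W idop a b)"
    by (simp only: mmul_add_r mmul_scal_r opeq_refl)
  also have "opeq N m \<dots> (\<lambda>a b. \<alpha> * mmul N m Y W a b + \<beta> * mmul N m idop W a b)"
    by (intro opeq_add opeq_scal WX opeq_trans[OF mmul_idop_r opeq_sym[OF mmul_idop_l]])
  also have "opeq N m \<dots> (mmul N m (\<lambda>a b. \<alpha> * Y a b + \<beta> * idop a b) W)"
    by (simp only: mmul_add_l mmul_scal_l opeq_refl)
  finally show ?thesis .
qed

section \<open>Operators acting in chosen tensor factors\<close>

lemma emb_subidx: "emb ps Y a b = (if \<forall>i<length a. Suc i \<notin> set ps \<longrightarrow> a ! i = b ! i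
      then Y (subidx ps a) (subidx ps b) else 0)"
  by (auto simp: emb_def subidx_def)

lemma sum_emb_left:
  fixes f :: "'a::zero \<Rightarrow> 'c \<Rightarrow> 'd::comm_monoid_add"
  assumes a: "a \<in> idx m N" and ps: "valid_pos m ps" and f0: "\<And>y. f 0 y = 0"
  shows "(\<Sum>c\<in>idx m N. f (emb ps X a c) (Y c)) = (\<Sum>d\<in>idx (length ps) N. f (X (subidx ps a) d) (Y (setidx a ps d)))"
proof -
  let ?T = "{c\<in>idx m N. \<forall>i<length a. Suc i \<notin> set ps \<longrightarrow> a ! i = c ! i}"
  have "(\<Sum>c\<in>idx m N. f (emb ps X a c) (Y c)) = (\<Sum>c\<in>?T. f (emb ps X a c) (Y c))"
  proof (rule sum.mono_neutral_right)
    show "\<forall>c\<in>idx m N - ?T. f (emb ps X a c) (Y c) = 0"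
    proof
      fix c assume c: "c \<in> idx m N - ?T"
      then obtain i where i: "i < length a" "Suc i \<notin> set ps" "a ! i \<noteq> c ! i" by auto
      have "emb ps X a c = 0" unfolding emb_subidx using i by (metis (no_types, lifting))
      then show "f (emb ps X a c) (Y c) = 0" by (simp add: f0)
    qed
  qed auto
  also have "\<dots> = (\<Sum>c\<in>?T. f (X (subidx ps a) (subidx ps c)) (Y c))"
  proof (rule sum.cong[OF refl])
    fix c assume c: "c \<in> ?T"
    then have "\<forall>i<length a. Suc i \<notin> set ps \<longrightarrow> a ! i = c ! i" by auto
    then show "f (emb ps X a c) (Y c) = f (X (subidx ps a) (subidx ps c)) (Y c)" by (simp add: emb_subidx)
  qed
  also have "\<dots> = (\<Sum>d\<in>idx (length ps) N. f (X (subidx ps a) (subidx ps (setidx a ps d))) (Y (setidx a ps d)))"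
    by (rule sum.reindex_bij_betw[OF bij_betw_setidx[OF a ps], symmetric])
  also have "\<dots> = (\<Sum>d\<in>idx (length ps) N. f (X (subidx ps a) d) (Y (setidx a ps d)))"
  proof (intro sum.cong refl)
    fix d assume "d \<in> idx (length ps) N"
    then have "subidx ps (setidx a ps d) = d"
      using ps a by (intro subidx_setidx) (auto simp: valid_pos_def)
    then show "f (X (subidx ps a) (subidx ps (setidx a ps d))) (Y (setidx a ps d)) = f (X (subidx ps a) d) (Y (setidx a ps d))"
      by simp
  qed
  finally show ?thesis .
qed

definition opprod :: "('x \<Rightarrow> 'y \<Rightarrow> 'z::comm_monoid_add) \<Rightarrow> nat \<Rightarrow> nat \<Rightarrow> 'x op \<Rightarrow> 'y op \<Rightarrow> 'z op" where
  "opprod f N m X Y a b = (\<Sum>c\<in>idx m N. f (X a c) (Y c b))"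

lemma mmul_opprod: "mmul N m X Y = opprod (*) N m X Y"
  by (simp add: fun_eq_iff mmul_def opprod_def)

lemma lsmul_opprod: "lsmul sm N m C X = opprod sm N m C X"
  by (simp add: fun_eq_iff lsmul_def opprod_def)

lemma rsmul_opprod: "rsmul sm N m X C = opprod (\<lambda>x c. sm c x) N m X C"
  by (simp add: fun_eq_iff rsmul_def opprod_def)

lemma emb_cond_setidx:
  assumes "valid_pos m ps" "length a = m"
  shows "(\<forall>i<length (setidx a ps d). Suc i \<notin> set ps \<longrightarrow> setidx a ps d ! i = b ! i)
     = (\<forall>i<length a. Suc i \<notin> set ps \<longrightarrow> a ! i = b ! i)"
proof -
  have "0 \<notin> set ps" using assms(1) by (auto simp: valid_pos_def)
  then show ?thesis using assms by (auto simp: setidx_nth_other)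
qed

lemma emb_opprod:
  assumes ps: "valid_pos m ps" and a: "a \<in> idx m N" and b: "b \<in> idx m N"
    and f1: "\<And>y. f 0 y = 0" and f2: "\<And>x. f x 0 = 0"
  shows "opprod f N m (emb ps X) (emb ps Y) a b = emb ps (opprod f N (length ps) X Y) a b"
proof -
  have la: "length a = m" using a by simp
  have "opprod f N m (emb ps X) (emb ps Y) a b
      = (\<Sum>d\<in>idx (length ps) N. f (X (subidx ps a) d) (emb ps Y (setidx a ps d) b))"
    unfolding opprod_def using a ps f1 by (rule sum_emb_left)
  also have "\<dots> = (\<Sum>d\<in>idx (length ps) N. if (\<forall>i<length a. Suc i \<notin> set ps \<longrightarrow> a ! i = b ! i)
        then f (X (subidx ps a) d) (Y d (subidx ps b)) else 0)"
  proof (rule sum.cong[OF refl])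
    fix d assume d: "d \<in> idx (length ps) N"
    have h1: "distinct ps" "0 \<notin> set ps" using ps unfolding valid_pos_def by auto
    have h2: "\<forall>p\<in>set ps. p \<le> length a" using ps la unfolding valid_pos_def by auto
    have h3: "length d = length ps" using d by simp
    show "f (X (subidx ps a) d) (emb ps Y (setidx a ps d) b) = (if (\<forall>i<length a. Suc i \<notin> set ps \<longrightarrow> a ! i = b ! i)
        then f (X (subidx ps a) d) (Y d (subidx ps b)) else 0)"
      unfolding emb_subidx[of ps Y] emb_cond_setidx[OF ps la] subidx_setidx[OF h1 h2 h3] by (auto simp: f2)
  qed
  also have "\<dots> = emb ps (opprod f N (length ps) X Y) a b"
  proof (cases "\<forall>i<length a. Suc i \<notin> set ps \<longrightarrow> a ! i = b ! i")
    case True then show ?thesis by (simp only: emb_subidx opprod_def if_P[OF True])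
  next
    case False then show ?thesis by (simp only: emb_subidx opprod_def if_not_P[OF False] if_False sum.neutral_const)
  qed
  finally show ?thesis .
qed

lemma emb_mmul: "valid_pos m ps \<Longrightarrow> opeq N m (mmul N m (emb ps X) (emb ps Y)) (emb ps (mmul N (length ps) X Y))"
  unfolding opeq_def mmul_opprod by (auto intro!: emb_opprod)

lemma subidx_subidx: assumes "set qs \<subseteq> {1..length ps}"
  shows "subidx qs (subidx ps a) = subidx (map (\<lambda>j. ps ! (j - 1)) qs) a"
proof -
  have "j - 1 < length ps" if "j \<in> set qs" for j
  proof -
    have "j \<in> {1..length ps}" using that assms by blast
    then show ?thesis by auto
  qed
  then show ?thesis unfolding subidx_def by simp
qed

lemma agree_off_compose:
  assumes qs: "set qs \<subseteq> {1..length ps}"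
    and agree_ps: "\<forall>i<length a. Suc i \<notin> set ps \<longrightarrow> a ! i = b ! i"
    and agree_qs: "\<forall>i<length ps. Suc i \<notin> set qs \<longrightarrow> subidx ps a ! i = subidx ps b ! i"
  shows "\<forall>i<length a. Suc i \<notin> set (map (\<lambda>j. ps ! (j - 1)) qs) \<longrightarrow> a ! i = b ! i"
proof (intro allI impI)
  fix i assume i: "i < length a" "Suc i \<notin> set (map (\<lambda>j. ps ! (j - 1)) qs)"
  show "a ! i = b ! i"
  proof (cases "Suc i \<in> set ps")
    case True
    then obtain j where j: "j < length ps" "ps ! j = Suc i" by (auto simp: in_set_conv_nth)
    have "Suc j \<notin> set qs"
    proof
      assume "Suc j \<in> set qs"
      then have "ps ! (Suc j - 1) \<in> set (map (\<lambda>j. ps ! (j - 1)) qs)" by force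
      then show False using i j by simp
    qed
    then have "subidx ps a ! j = subidx ps b ! j" using agree_qs j by auto
    then show ?thesis using j by (simp add: subidx_def)
  qed (use agree_ps i in auto)
qed

lemma agree_off_decompose:
  assumes ps: "valid_pos m ps" and qs: "set qs \<subseteq> {1..length ps}" and la: "length a = m"
    and agree: "\<forall>i<length a. Suc i \<notin> set (map (\<lambda>j. ps ! (j - 1)) qs) \<longrightarrow> a ! i = b ! i"
  shows "(\<forall>i<length a. Suc i \<notin> set ps \<longrightarrow> a ! i = b ! i)
    \<and> (\<forall>i<length ps. Suc i \<notin> set qs \<longrightarrow> subidx ps a ! i = subidx ps b ! i)"
proof
  have "set (map (\<lambda>j. ps ! (j - 1)) qs) \<subseteq> set ps"
    using qs by (force simp: Suc_le_eq)
  then show "\<forall>i<length a. Suc i \<notin> set ps \<longrightarrow> a ! i = b ! i" using agree by blast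
  show "\<forall>i<length ps. Suc i \<notin> set qs \<longrightarrow> subidx ps a ! i = subidx ps b ! i"
  proof (intro allI impI)
    fix i assume ip: "i < length ps" and i: "Suc i \<notin> set qs"
    have "ps ! i \<in> set ps" using ip by simp
    then have pi1: "ps ! i \<ge> 1" "ps ! i \<le> m" using ps by (auto simp: valid_pos_def)
    have "ps ! i \<notin> set (map (\<lambda>j. ps ! (j - 1)) qs)"
    proof
      assume "ps ! i \<in> set (map (\<lambda>j. ps ! (j - 1)) qs)"
      then obtain j where j: "j \<in> set qs" "ps ! i = ps ! (j - 1)" by auto
      then have "j \<in> {1..length ps}" using qs by blast
      then have "j - 1 < length ps" "j \<ge> 1" by auto
      then have "i = j - 1" using j ip ps by (auto simp: valid_pos_def nth_eq_iff_index_eq)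
      then show False using j i \<open>j \<ge> 1\<close> by auto
    qed
    then have "a ! (ps ! i - 1) = b ! (ps ! i - 1)" using agree pi1 la by (auto dest!: spec[of _ "ps ! i - 1"])
    then show "subidx ps a ! i = subidx ps b ! i" using ip by (simp add: subidx_def)
  qed
qed

lemma emb_emb:
  assumes ps: "valid_pos m ps" and qs: "set qs \<subseteq> {1..length ps}" and la: "length a = m"
  shows "emb ps (emb qs X) a b = emb (map (\<lambda>j. ps ! (j - 1)) qs) X a b"
proof -
  have "((\<forall>i<length a. Suc i \<notin> set ps \<longrightarrow> a ! i = b ! i) \<and>
        (\<forall>i<length (subidx ps a). Suc i \<notin> set qs \<longrightarrow> subidx ps a ! i = subidx ps b ! i))
      = (\<forall>i<length a. Suc i \<notin> set (map (\<lambda>j. ps ! (j - 1)) qs) \<longrightarrow> a ! i = b ! i)"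
    (is "?L = ?R")
  proof
    assume ?L then show ?R unfolding length_subidx by (intro agree_off_compose[OF qs]) blast+
  next
    assume ?R then show ?L unfolding length_subidx by (rule agree_off_decompose[OF ps qs la])
  qed
  then show ?thesis
    by (simp only: emb_subidx[of ps] emb_subidx[of qs] emb_subidx[of "map (\<lambda>j. ps ! (j - 1)) qs"] subidx_subidx[OF qs] if_if_eq_conj)
qed

lemma subidx_full: "length a = m \<Longrightarrow> subidx [1..<Suc m] a = a"
  unfolding subidx_def by (rule nth_equalityI) (simp_all del: upt_Suc)

lemma emb_full:
  assumes "length a = m" "length b = m"
  shows "emb [1..<Suc m] X a b = X a b"
  using assms subidx_full[of a m] subidx_full[of b m] by (simp add: emb_subidx del: upt_Suc)

lemma emb_idop:
  assumes ps: "set ps \<subseteq> {1..m}" and la: "length a = m" and lb: "length b = m"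
  shows "emb ps idop a b = idop a b"
proof -
  have "((\<forall>i<length a. Suc i \<notin> set ps \<longrightarrow> a ! i = b ! i) \<and> subidx ps a = subidx ps b) = (a = b)"
  proof
    assume H: "(\<forall>i<length a. Suc i \<notin> set ps \<longrightarrow> a ! i = b ! i) \<and> subidx ps a = subidx ps b"
    show "a = b"
    proof (rule nth_equalityI)
      show "length a = length b" using la lb by simp
      fix i assume i: "i < length a"
      show "a ! i = b ! i"
      proof (cases "Suc i \<in> set ps")
        case True
        then obtain j where j: "j < length ps" "ps ! j = Suc i" by (auto simp: in_set_conv_nth)
        have "subidx ps a ! j = subidx ps b ! j" using H by simp
        then show ?thesis using j by (simp add: subidx_def)
      qed (use H i in auto)
    qed
  qed auto
  then show ?thesis by (auto simp: emb_subidx idop_def)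
qed

lemma emb_opeq:
  assumes "opeq N (length ps) X Y" "set ps \<subseteq> {1..m}"
  shows "opeq N m (emb ps X) (emb ps Y)"
  unfolding opeq_def
proof (intro ballI)
  fix a b assume a: "a \<in> idx m N" and b: "b \<in> idx m N"
  have "subidx ps a \<in> idx (length ps) N" "subidx ps b \<in> idx (length ps) N"
    using subidx_in_idx[OF a assms(2)] subidx_in_idx[OF b assms(2)] by auto
  then show "emb ps X a b = emb ps Y a b" using assms(1) by (auto simp: emb_subidx opeq_def)
qed

lemma subidx_setidx_disjoint:
  assumes "0 \<notin> set ps" "set ps \<inter> set qs = {}" "0 \<notin> set qs"
  shows "subidx qs (setidx a ps d) = subidx qs a"
  unfolding subidx_def
proof (rule map_cong[OF refl])
  fix p assume "p \<in> set qs"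
  then have "p \<notin> set ps" "p \<noteq> 0" using assms by auto
  then have "Suc (p - 1) \<notin> set ps" by simp
  then show "setidx a ps d ! (p - 1) = a ! (p - 1)" by (rule setidx_nth_other[OF _ assms(1)])
qed

lemma setidx_agree_iff:
  assumes ps: "valid_pos m ps" and dj: "set ps \<inter> set qs = {}"
    and la: "length a = m" and d: "length d = length ps"
  shows "(\<forall>i<m. Suc i \<notin> set qs \<longrightarrow> setidx a ps d ! i = b ! i)
     \<longleftrightarrow> d = subidx ps b \<and> (\<forall>i<m. Suc i \<notin> set ps \<union> set qs \<longrightarrow> a ! i = b ! i)"
    (is "?L \<longleftrightarrow> _ \<and> ?C")
proof
  have h1: "distinct ps" "0 \<notin> set ps" and h2: "\<forall>p\<in>set ps. p \<le> length a"
    using ps la unfolding valid_pos_def by auto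
  assume L: ?L
  have "subidx ps (setidx a ps d) = subidx ps b"
    unfolding subidx_def
  proof (rule map_cong[OF refl])
    fix p assume p: "p \<in> set ps"
    then have "p \<notin> set qs" "p \<ge> 1" "p \<le> m" using dj ps by (auto simp: valid_pos_def)
    then show "setidx a ps d ! (p - 1) = b ! (p - 1)" using L by auto
  qed
  then have "d = subidx ps b" using subidx_setidx[OF h1 h2 d] by simp
  moreover have ?C
  proof (intro allI impI)
    fix i assume i: "i < m" "Suc i \<notin> set ps \<union> set qs"
    then have "setidx a ps d ! i = a ! i" using h1 by (intro setidx_nth_other) auto
    then show "a ! i = b ! i" using L i by auto
  qed
  ultimately show "d = subidx ps b \<and> ?C" ..
next
  assume R: "d = subidx ps b \<and> ?C"
  have p0: "0 \<notin> set ps" using ps by (auto simp: valid_pos_def)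
  show ?L
  proof (intro allI impI)
    fix i assume i: "i < m" "Suc i \<notin> set qs"
    show "setidx a ps d ! i = b ! i"
    proof (cases "Suc i \<in> set ps")
      case True
      then show ?thesis using R i la by (auto intro: setidx_subidx_nth)
    next
      case False
      then show ?thesis using R i setidx_nth_other[OF False p0] by auto
    qed
  qed
qed

lemma opprod_emb_disjoint:
  assumes ps: "valid_pos m ps" and qs: "valid_pos m qs" and dj: "set ps \<inter> set qs = {}"
    and a: "a \<in> idx m N" and b: "b \<in> idx m N"
    and f1: "\<And>y. f 0 y = 0" and f2: "\<And>x. f x 0 = 0"
  shows "opprod f N m (emb ps X) (emb qs Y) a b =
     (if \<forall>i<m. Suc i \<notin> set ps \<union> set qs \<longrightarrow> a ! i = b ! i
      then f (X (subidx ps a) (subidx ps b)) (Y (subidx qs a) (subidx qs b)) else 0)"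
    (is "_ = (if ?C then ?f (subidx ps b) else 0)")
proof -
  have sq: "subidx qs (setidx a ps d) = subidx qs a" for d
    using ps qs dj by (intro subidx_setidx_disjoint) (auto simp: valid_pos_def)
  have "opprod f N m (emb ps X) (emb qs Y) a b
      = (\<Sum>d\<in>idx (length ps) N. f (X (subidx ps a) d) (emb qs Y (setidx a ps d) b))"
    unfolding opprod_def using a ps f1 by (rule sum_emb_left)
  also have "\<dots> = (\<Sum>d\<in>idx (length ps) N. if d = subidx ps b then (if ?C then ?f d else 0) else 0)"
    using setidx_agree_iff[OF ps dj] a by (intro sum.cong refl) (auto simp: emb_subidx sq f2)
  also have "\<dots> = (if ?C then ?f (subidx ps b) else 0)"
    using subidx_in_idx[OF b] ps by (simp add: valid_pos_def sum.delta)
  finally show ?thesis .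
qed

lemma emb_mmul3:
  assumes ok: "valid_pos m P"
  shows "opeq N m (emb P (mmul N (length P) (mmul N (length P) A B) (C :: complex op)))
     (mmul N m (mmul N m (emb P A) (emb P B)) (emb P C))"
proof -
  have "opeq N m (emb P (mmul N (length P) (mmul N (length P) A B) C)) (mmul N m (emb P (mmul N (length P) A B)) (emb P C))"
    using emb_mmul[OF ok, of N "mmul N (length P) A B" C] by (simp add: opeq_sym)
  also have "opeq N m \<dots> (mmul N m (mmul N m (emb P A) (emb P B)) (emb P C))"
    using emb_mmul[OF ok, of N A B] by (intro mmul_cong) (simp_all add: opeq_sym)
  finally show ?thesis .
qed

lemma mmul_emb_disjoint_commute:
  assumes "valid_pos m ps" "valid_pos m qs" "set ps \<inter> set qs = {}"
  shows "opeq N m (mmul N m (emb ps X) (emb qs Y)) (mmul N m (emb qs Y) (emb ps (X :: complex op)))"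
  unfolding opeq_def mmul_opprod
proof (intro ballI)
  fix a b assume a: "a \<in> idx m N" and b: "b \<in> idx m N"
  have dj: "set qs \<inter> set ps = {}" using assms(3) by blast
  have e1: "opprod (*) N m (emb ps X) (emb qs Y) a b = (if \<forall>i<m. Suc i \<notin> set ps \<union> set qs \<longrightarrow> a ! i = b ! i
      then X (subidx ps a) (subidx ps b) * Y (subidx qs a) (subidx qs b) else 0)"
    by (rule opprod_emb_disjoint[OF assms(1,2,3) a b]) simp_all
  have e2: "opprod (*) N m (emb qs Y) (emb ps X) a b = (if \<forall>i<m. Suc i \<notin> set qs \<union> set ps \<longrightarrow> a ! i = b ! i
      then Y (subidx qs a) (subidx qs b) * X (subidx ps a) (subidx ps b) else 0)"
    by (rule opprod_emb_disjoint[OF assms(2,1) dj a b]) simp_all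
  show "opprod (*) N m (emb ps X) (emb qs Y) a b = opprod (*) N m (emb qs Y) (emb ps X) a b"
    by (simp only: e1 e2 Un_commute[of "set qs"] mult.commute[of "Y _ _"])
qed

lemma emb_scal: "emb ps (\<lambda>a b. c * X a b) = (\<lambda>a b. c * emb ps X a b :: complex)"
  by (auto simp: fun_eq_iff emb_def)

lemma emb_div: "emb ps (\<lambda>a b. X a b / c) = (\<lambda>a b. emb ps X a b / c :: complex)"
  by (auto simp: fun_eq_iff emb_def)

lemma emb_diff: "emb ps (\<lambda>a b. X a b - Y a b) = (\<lambda>a b. emb ps X a b - emb ps (Y :: complex op) a b)"
  by (auto simp: fun_eq_iff emb_def)

lemma emb_lin2: "emb P (\<lambda>a b. c * X a b - d * Y a b) = (\<lambda>a b. c * emb P X a b - d * emb P Y a b :: complex)"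
  by (auto simp: emb_def fun_eq_iff)

lemma emb_zero: "emb ps (\<lambda>a b. 0) = (\<lambda>a b. 0 :: 'z::zero)"
  by (auto simp: fun_eq_iff emb_def)

lemma emb_idop_opeq: "set ps \<subseteq> {1..m} \<Longrightarrow> opeq N m (emb ps idop) (idop :: complex op)"
  unfolding opeq_def by (auto simp: emb_idop)

lemma valid_pos2: "1 \<le> i \<Longrightarrow> Suc i \<le> m \<Longrightarrow> valid_pos m [i, Suc i]"
  by (auto simp: valid_pos_def)

lemma valid_pos3: "1 \<le> i \<Longrightarrow> Suc (Suc i) \<le> m \<Longrightarrow> valid_pos m [i, Suc i, Suc (Suc i)]"
  by (auto simp: valid_pos_def)

lemma emb3_12: "1 \<le> i \<Longrightarrow> Suc (Suc i) \<le> m \<Longrightarrow>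
  opeq N m (emb [i, Suc i, Suc (Suc i)] (emb [1,2] X)) (emb [i, Suc i] X)"
  unfolding opeq_def by (auto simp: emb_emb[OF valid_pos3])

lemma emb3_23: "1 \<le> i \<Longrightarrow> Suc (Suc i) \<le> m \<Longrightarrow>
  opeq N m (emb [i, Suc i, Suc (Suc i)] (emb [2,3] X)) (emb [Suc i, Suc (Suc i)] X)"
  unfolding opeq_def by (auto simp: emb_emb[OF valid_pos3])

lemma emb2_mmul:
  assumes "1 \<le> i" "Suc i \<le> m"
  shows "opeq N m (emb [i, Suc i] (mmul N 2 A B))
     (mmul N m (emb [i, Suc i] A) (emb [i, Suc i] B))"
  using emb_mmul[OF valid_pos2[OF assms], of N A B] by (simp add: opeq_sym numeral_2_eq_2)

lemma emb2_opeq: "opeq N 2 X Y \<Longrightarrow> 1 \<le> i \<Longrightarrow> Suc i \<le> m \<Longrightarrow> opeq N m (emb [i, Suc i] X) (emb [i, Suc i] Y)"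
  using emb_opeq[of N "[i, Suc i]" X Y m] by (simp add: numeral_2_eq_2)

lemma emb2_inverse:
  fixes X Y :: "complex op"
  assumes H: "opeq N 2 (mmul N 2 X Y) idop" and i: "1 \<le> i" "Suc i \<le> m"
  shows "opeq N m (mmul N m (emb [i, Suc i] X) (emb [i, Suc i] Y)) idop"
proof -
  have "opeq N m (mmul N m (emb [i, Suc i] X) (emb [i, Suc i] Y)) (emb [i, Suc i] (mmul N 2 X Y))"
    by (rule opeq_sym[OF emb2_mmul[OF i]])
  also have "opeq N m \<dots> (emb [i, Suc i] idop)" by (rule emb2_opeq[OF H i])
  also have "opeq N m \<dots> idop" by (rule emb_idop_opeq) (use i in auto)
  finally show ?thesis .
qed

lemma emb3_opeq: "opeq N 3 X Y \<Longrightarrow> 1 \<le> i \<Longrightarrow> Suc (Suc i) \<le> m \<Longrightarrow>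
   opeq N m (emb [i, Suc i, Suc (Suc i)] X) (emb [i, Suc i, Suc (Suc i)] Y)"
  using emb_opeq[of N "[i, Suc i, Suc (Suc i)]" X Y m] by (simp add: numeral_3_eq_3)

lemma emb3_relation:
  assumes H: "opeq N 3 (mmul N 3 (mmul N 3 (emb [1,2] X) (emb [2,3] Y)) (emb [1,2] Z))
                      (mmul N 3 (mmul N 3 (emb [2,3] U) (emb [1,2] V)) (emb [2,3] (W :: complex op)))"
    and i: "1 \<le> i" "Suc (Suc i) \<le> m"
  shows "opeq N m (mmul N m (mmul N m (emb [i, Suc i] X) (emb [Suc i, Suc (Suc i)] Y)) (emb [i, Suc i] Z))
                  (mmul N m (mmul N m (emb [Suc i, Suc (Suc i)] U) (emb [i, Suc i] V)) (emb [Suc i, Suc (Suc i)] W))"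
proof -
  let ?p = "[i, Suc i, Suc (Suc i)]"
  have prod: "opeq N m (emb ?p (mmul N 3 (mmul N 3 A B) C)) (mmul N m (mmul N m (emb ?p A) (emb ?p B)) (emb ?p C))"
    for A B C :: "complex op"
    using emb_mmul3[OF valid_pos3[OF i], of N A B C] by (simp add: numeral_3_eq_3)
  have "opeq N m (mmul N m (mmul N m (emb [i, Suc i] X) (emb [Suc i, Suc (Suc i)] Y)) (emb [i, Suc i] Z))
      (mmul N m (mmul N m (emb ?p (emb [1,2] X)) (emb ?p (emb [2,3] Y))) (emb ?p (emb [1,2] Z)))"
    by (intro mmul_cong opeq_sym[OF emb3_12[OF i]] opeq_sym[OF emb3_23[OF i]])
  also have "opeq N m \<dots> (emb ?p (mmul N 3 (mmul N 3 (emb [1,2] X) (emb [2,3] Y)) (emb [1,2] Z)))"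
    by (rule opeq_sym[OF prod])
  also have "opeq N m \<dots> (emb ?p (mmul N 3 (mmul N 3 (emb [2,3] U) (emb [1,2] V)) (emb [2,3] W)))"
    by (rule emb3_opeq[OF H i])
  also have "opeq N m \<dots> (mmul N m (mmul N m (emb ?p (emb [2,3] U)) (emb ?p (emb [1,2] V))) (emb ?p (emb [2,3] W)))"
    by (rule prod)
  also have "opeq N m \<dots> (mmul N m (mmul N m (emb [Suc i, Suc (Suc i)] U) (emb [i, Suc i] V)) (emb [Suc i, Suc (Suc i)] W))"
    by (intro mmul_cong emb3_12[OF i] emb3_23[OF i])
  finally show ?thesis .
qed

lemma valid_pos_prefix: "m' \<le> m \<Longrightarrow> valid_pos m [1..<Suc m']"
  by (auto simp: valid_pos_def)

lemma emb_emb_prefix: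
  assumes "m' \<le> m" "set qs \<subseteq> {1..m'}"
  shows "opeq N m (emb [1..<Suc m'] (emb qs X)) (emb qs X)"
proof -
  have map_id: "map (\<lambda>j. [1..<Suc m'] ! (j - 1)) qs = qs"
  proof (rule map_idI)
    fix j assume "j \<in> set qs"
    then have "1 \<le> j" "j \<le> m'" using assms by auto
    then show "[1..<Suc m'] ! (j - 1) = j" by simp
  qed
  have qs: "set qs \<subseteq> {1..length [1..<Suc m']}" using assms by simp
  show ?thesis
    unfolding opeq_def
  proof (intro ballI)
    fix a b assume "a \<in> idx m N"
    then have "emb [1..<Suc m'] (emb qs X) a b = emb (map (\<lambda>j. [1..<Suc m'] ! (j - 1)) qs) X a b"
      by (intro emb_emb[OF valid_pos_prefix[OF assms(1)] qs]) simp
    then show "emb [1..<Suc m'] (emb qs X) a b = emb qs X a b" by (simp only: map_id)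
  qed
qed

lemma emb12_emb: "Suc 1 \<le> m \<Longrightarrow> set qs \<subseteq> {1..2} \<Longrightarrow>
   opeq N m (emb [1, Suc 1] (emb qs X)) (emb (map (\<lambda>j. [1, Suc 1] ! (j - 1)) qs) X)"
proof (unfold opeq_def, intro ballI)
  fix a b assume n2: "Suc 1 \<le> m" and qs: "set qs \<subseteq> {1..2}" and a: "a \<in> idx m N" and b: "b \<in> idx m N"
  have ok: "valid_pos m [1, Suc 1]" by (rule valid_pos2) (use n2 in auto)
  have qs': "set qs \<subseteq> {1..length [1, Suc 1]}" using qs by (simp add: numeral_2_eq_2)
  show "emb [1, Suc 1] (emb qs X) a b = emb (map (\<lambda>j. [1, Suc 1] ! (j - 1)) qs) X a b"
    by (rule emb_emb[OF ok qs']) (use a b in simp_all)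
qed

section \<open>Operators with entries in a complex algebra\<close>

locale cmodule = module sm for sm :: "complex \<Rightarrow> 'b::ab_group_add \<Rightarrow> 'b"

begin

lemma lsmul_lsmul: "lsmul sm N m C (lsmul sm N m D X) = lsmul sm N m (mmul N m C D) X"
  unfolding lsmul_def mmul_def fun_eq_iff
  by (simp add: scale_sum_right scale_sum_left) (rule allI, rule allI, rule sum.swap)

lemma rsmul_rsmul: "rsmul sm N m (rsmul sm N m X C) D = rsmul sm N m X (mmul N m C D)"
  unfolding rsmul_def mmul_def fun_eq_iff
  by (simp add: scale_sum_right scale_sum_left mult.commute) (rule allI, rule allI, rule sum.swap)

lemma lsmul_rsmul: "lsmul sm N m C (rsmul sm N m X D) = rsmul sm N m (lsmul sm N m C X) D"
  unfolding rsmul_def lsmul_def fun_eq_iff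
  by (simp add: scale_sum_right mult.commute) (rule allI, rule allI, rule sum.swap)

lemma lsmul_cong: "opeq N m C C' \<Longrightarrow> opeq N m X X' \<Longrightarrow> opeq N m (lsmul sm N m C X) (lsmul sm N m C' X')"
  unfolding opeq_def lsmul_def by simp

lemma rsmul_cong: "opeq N m X X' \<Longrightarrow> opeq N m C C' \<Longrightarrow> opeq N m (rsmul sm N m X C) (rsmul sm N m X' C')"
  unfolding opeq_def rsmul_def by simp

lemma lsmul_idop: "opeq N m (lsmul sm N m idop X) X"
proof -
  have "\<And>a b c. sm (idop a c) (X c b) = (if a = c then X c b else 0)" by (simp add: idop_def)
  then show ?thesis unfolding opeq_def lsmul_def by (simp add: sum.delta)
qed

lemma rsmul_idop: "opeq N m (rsmul sm N m X idop) X"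
proof -
  have "\<And>a b c. sm (idop c b) (X a c) = (if c = b then X a c else 0)" by (simp add: idop_def)
  then show ?thesis unfolding opeq_def rsmul_def by (simp add: sum.delta')
qed

lemma lsmul_add_o: "lsmul sm N m (\<lambda>a b. C a b + D a b) X = (\<lambda>a b. lsmul sm N m C X a b + lsmul sm N m D X a b)"
  by (simp add: lsmul_def fun_eq_iff scale_left_distrib sum.distrib)

lemma lsmul_scal_o: "lsmul sm N m (\<lambda>a b. c * C a b) X = (\<lambda>a b. sm c (lsmul sm N m C X a b))"
  by (simp add: lsmul_def fun_eq_iff scale_sum_right)

lemma rsmul_add_o: "rsmul sm N m X (\<lambda>a b. C a b + D a b) = (\<lambda>a b. rsmul sm N m X C a b + rsmul sm N m X D a b)"
  by (simp add: rsmul_def fun_eq_iff scale_left_distrib sum.distrib)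

lemma rsmul_scal_o: "rsmul sm N m X (\<lambda>a b. c * C a b) = (\<lambda>a b. sm c (rsmul sm N m X C a b))"
  by (simp add: rsmul_def fun_eq_iff scale_sum_right)

lemma lsmul_zero_v[simp]: "lsmul sm N m C (\<lambda>a b. 0) = (\<lambda>a b. 0)"
  by (simp add: lsmul_def fun_eq_iff)

lemma rsmul_zero_v[simp]: "rsmul sm N m (\<lambda>a b. 0) C = (\<lambda>a b. 0)"
  by (simp add: rsmul_def fun_eq_iff)

lemma emb_lsmul: "valid_pos m ps \<Longrightarrow>
   opeq N m (lsmul sm N m (emb ps C) (emb ps X)) (emb ps (lsmul sm N (length ps) C X))"
  unfolding opeq_def lsmul_opprod by (auto intro!: emb_opprod)

lemma emb_rsmul: "valid_pos m ps \<Longrightarrow>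
   opeq N m (rsmul sm N m (emb ps X) (emb ps C)) (emb ps (rsmul sm N (length ps) X C))"
  unfolding opeq_def rsmul_opprod by (auto intro!: emb_opprod)

lemma emb2_lsmul: "1 \<le> i \<Longrightarrow> Suc i \<le> m \<Longrightarrow>
  opeq N m (emb [i, Suc i] (lsmul sm N 2 C X)) (lsmul sm N m (emb [i, Suc i] C) (emb [i, Suc i] X))"
  using emb_lsmul[OF valid_pos2, of i m N C X] by (simp add: numeral_2_eq_2 opeq_sym)

lemma emb2_rsmul: "1 \<le> i \<Longrightarrow> Suc i \<le> m \<Longrightarrow>
  opeq N m (emb [i, Suc i] (rsmul sm N 2 X C)) (rsmul sm N m (emb [i, Suc i] X) (emb [i, Suc i] C))"
  using emb_rsmul[OF valid_pos2, of i m N X C] by (simp add: numeral_2_eq_2 opeq_sym)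

lemma lsmul_emb_disjoint_commute:
  assumes "valid_pos m ps" "valid_pos m qs" "set ps \<inter> set qs = {}"
  shows "opeq N m (lsmul sm N m (emb ps C) (emb qs X)) (rsmul sm N m (emb qs X) (emb ps C))"
  unfolding opeq_def lsmul_opprod rsmul_opprod
proof (intro ballI)
  fix a b assume a: "a \<in> idx m N" and b: "b \<in> idx m N"
  have dj: "set qs \<inter> set ps = {}" using assms(3) by blast
  have e1: "opprod sm N m (emb ps C) (emb qs X) a b = (if \<forall>i<m. Suc i \<notin> set ps \<union> set qs \<longrightarrow> a ! i = b ! i
      then sm (C (subidx ps a) (subidx ps b)) (X (subidx qs a) (subidx qs b)) else 0)"
    by (rule opprod_emb_disjoint[OF assms(1,2,3) a b]) simp_all
  have e2: "opprod (\<lambda>x c. sm c x) N m (emb qs X) (emb ps C) a b = (if \<forall>i<m. Suc i \<notin> set qs \<union> set ps \<longrightarrow> a ! i = b ! i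
      then sm (C (subidx ps a) (subidx ps b)) (X (subidx qs a) (subidx qs b)) else 0)"
    by (rule opprod_emb_disjoint[OF assms(2,1) dj a b]) simp_all
  show "opprod sm N m (emb ps C) (emb qs X) a b = opprod (\<lambda>x c. sm c x) N m (emb qs X) (emb ps C) a b"
    by (simp only: e1 e2 Un_commute[of "set qs"])
qed

text \<open>Identities between operators are often checked by applying them to vectors (columns).\<close>

definition act :: "nat \<Rightarrow> nat \<Rightarrow> complex op \<Rightarrow> (nat list \<Rightarrow> 'b) \<Rightarrow> nat list \<Rightarrow> 'b" where
  "act N m C w = (\<lambda>a. if a \<in> idx m N then \<Sum>b\<in>idx m N. sm (C a b) (w b) else 0)"

definition is_vec :: "nat \<Rightarrow> nat \<Rightarrow> (nat list \<Rightarrow> 'b) \<Rightarrow> bool" where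
  "is_vec N m w \<longleftrightarrow> (\<forall>a. a \<notin> idx m N \<longrightarrow> w a = 0)"

lemma act_is_vec[simp]: "is_vec N m (act N m C w)"
  by (simp add: is_vec_def act_def)

lemma act_mmul: "act N m (mmul N m C D) w = act N m C (act N m D w)"
  unfolding act_def mmul_def fun_eq_iff
  by (simp add: scale_sum_right scale_sum_left) (intro allI impI, rule sum.swap)

lemma act_opeq: "opeq N m C D \<Longrightarrow> act N m C w = act N m D w"
  unfolding act_def opeq_def fun_eq_iff by simp

lemma act_cong: "(\<And>a. a \<in> idx m N \<Longrightarrow> v a = w a) \<Longrightarrow> act N m C v = act N m C w"
  unfolding act_def fun_eq_iff by simp

lemma act_diff_v: "act N m C (\<lambda>a. v a - w a) = (\<lambda>a. act N m C v a - act N m C w a)"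
  by (simp add: act_def fun_eq_iff scale_right_diff_distrib sum_subtractf)

lemma act_scal_v: "act N m C (\<lambda>a. sm c (v a)) = (\<lambda>a. sm c (act N m C v a))"
  by (simp add: act_def fun_eq_iff scale_sum_right mult.commute)

lemma act_diff_o: "act N m (\<lambda>a b. C a b - D a b) w = (\<lambda>a. act N m C w a - act N m D w a)"
  by (simp add: act_def fun_eq_iff scale_left_diff_distrib sum_subtractf)

lemma act_scal_o: "act N m (\<lambda>a b. c * C a b) w = (\<lambda>a. sm c (act N m C w a))"
  by (simp add: act_def fun_eq_iff scale_sum_right)

lemma act_idop:
  assumes "is_vec N m w"
  shows "act N m idop w = w"
proof -
  have "\<And>a c. sm (idop a c) (w c) = (if a = c then w c else 0)" by (simp add: idop_def)
  then show ?thesis using assms unfolding act_def is_vec_def fun_eq_iff by (simp add: sum.delta)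
qed

lemma lsmul_column: "a \<in> idx m N \<Longrightarrow> lsmul sm N m C X a b = act N m C (\<lambda>c. X c b) a"
  by (simp add: lsmul_def act_def)

definition commutes :: "nat \<Rightarrow> nat \<Rightarrow> complex op \<Rightarrow> 'b op \<Rightarrow> bool" where
  "commutes N m X Y \<longleftrightarrow> opeq N m (lsmul sm N m X Y) (rsmul sm N m Y X)"

lemma commutes_conj:
  assumes Y: "commutes N m Y Mv" and XC: "opeq N m (mmul N m X C) (mmul N m C Y)"
    and DX: "opeq N m (mmul N m D X) (mmul N m Y D)"
  shows "commutes N m X (lsmul sm N m C (rsmul sm N m Mv D))"
proof -
  let ?ls = "lsmul sm N m" and ?rs = "rsmul sm N m"
  have "opeq N m (?ls X (?ls C (?rs Mv D))) (?ls (mmul N m X C) (?rs Mv D))"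
    by (simp only: lsmul_lsmul opeq_refl)
  also have "opeq N m \<dots> (?ls (mmul N m C Y) (?rs Mv D))"
    by (rule lsmul_cong[OF XC opeq_refl])
  also have "opeq N m \<dots> (?ls C (?rs (?ls Y Mv) D))"
    by (simp only: lsmul_lsmul[symmetric] lsmul_rsmul opeq_refl)
  also have "opeq N m \<dots> (?ls C (?rs (?rs Mv Y) D))"
    using Y unfolding commutes_def by (intro lsmul_cong rsmul_cong opeq_refl)
  also have "opeq N m \<dots> (?ls C (?rs Mv (mmul N m Y D)))"
    by (simp only: rsmul_rsmul opeq_refl)
  also have "opeq N m \<dots> (?ls C (?rs Mv (mmul N m D X)))"
    by (intro lsmul_cong rsmul_cong opeq_refl opeq_sym[OF DX])
  also have "opeq N m \<dots> (?rs (?ls C (?rs Mv D)) X)"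
    by (simp only: rsmul_rsmul[symmetric] lsmul_rsmul opeq_refl)
  finally show ?thesis unfolding commutes_def .
qed

lemma commutes_opeq:
  assumes a: "opeq N m X X'" and "commutes N m X Y"
  shows "commutes N m X' Y"
  unfolding commutes_def
proof -
  have b: "opeq N m (lsmul sm N m X Y) (rsmul sm N m Y X)" using assms(2) unfolding commutes_def .
  have "opeq N m (lsmul sm N m X' Y) (lsmul sm N m X Y)" by (intro lsmul_cong opeq_sym[OF a] opeq_refl)
  also note b
  also have "opeq N m (rsmul sm N m Y X) (rsmul sm N m Y X')" by (intro rsmul_cong a opeq_refl)
  finally show "opeq N m (lsmul sm N m X' Y) (rsmul sm N m Y X')" .
qed

lemma commutes_lincomb: "commutes N m X Y \<Longrightarrow> commutes N m X' Y \<Longrightarrow> commutes N m (\<lambda>a b. c * X a b + d * X' a b) Y"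
  unfolding commutes_def opeq_def by (simp add: lsmul_add_o rsmul_add_o lsmul_scal_o rsmul_scal_o)

lemma commutes_idop: "commutes N m idop Y"
  unfolding commutes_def using lsmul_idop rsmul_idop by (metis opeq_sym opeq_trans)

lemma commutes_emb_disjoint: "valid_pos m ps \<Longrightarrow> valid_pos m qs \<Longrightarrow> set ps \<inter> set qs = {} \<Longrightarrow> commutes N m (emb ps C) (emb qs X)"
  unfolding commutes_def by (rule lsmul_emb_disjoint_commute)

lemma commutes_inverse:
  assumes C: "commutes N m C Y" and CD: "opeq N m (mmul N m C D) idop" and DC: "opeq N m (mmul N m D C) idop"
  shows "commutes N m D Y"
proof -
  let ?ls = "lsmul sm N m" and ?rs = "rsmul sm N m"
  have Yeq: "opeq N m Y (?ls C (?rs Y D))"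
  proof -
    have "opeq N m (?ls C (?rs Y D)) (?rs (?ls C Y) D)" by (simp only: lsmul_rsmul opeq_refl)
    also have "opeq N m \<dots> (?rs (?rs Y C) D)" using C unfolding commutes_def by (intro rsmul_cong opeq_refl)
    also have "opeq N m \<dots> (?rs Y (mmul N m C D))" by (simp only: rsmul_rsmul opeq_refl)
    also have "opeq N m \<dots> (?rs Y idop)" by (intro rsmul_cong opeq_refl CD)
    also have "opeq N m \<dots> Y" by (rule rsmul_idop)
    finally show ?thesis by (rule opeq_sym)
  qed
  have "opeq N m (?ls D Y) (?ls D (?ls C (?rs Y D)))" by (intro lsmul_cong opeq_refl Yeq)
  also have "opeq N m \<dots> (?ls (mmul N m D C) (?rs Y D))" by (simp only: lsmul_lsmul opeq_refl)
  also have "opeq N m \<dots> (?ls idop (?rs Y D))" by (intro lsmul_cong opeq_refl DC)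
  also have "opeq N m \<dots> (?rs Y D)" by (rule lsmul_idop)
  finally show ?thesis unfolding commutes_def .
qed

end

interpretation cplx: cmodule "(*) :: complex \<Rightarrow> complex \<Rightarrow> complex"
  by unfold_locales (simp_all add: distrib_left distrib_right)

declare cplx.scale_scale [simp del] \<comment> \<open>it would fight mult.assoc in field_simps\<close>

lemma opeq_by_act:
  assumes act_eq: "\<And>w. cplx.act N m X w = cplx.act N m Y w"
  shows "opeq N m X Y"
  unfolding opeq_def
proof (intro ballI)
  fix a b assume a: "a \<in> idx m N" and b: "b \<in> idx m N"
  let ?w = "\<lambda>c. if c = b then 1 else (0::complex)"
  have "\<And>Z. cplx.act N m Z ?w a = Z a b"
  proof -
    fix Z :: "complex op"
    have "\<And>c. Z a c * ?w c = (if c = b then Z a c else 0)" by simp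
    then show "cplx.act N m Z ?w a = Z a b" using a b by (simp add: cplx.act_def sum.delta')
  qed
  then show "X a b = Y a b" using act_eq[of ?w] by metis
qed

locale calgebra = cmodule sm for sm :: "complex \<Rightarrow> 'a::ring \<Rightarrow> 'a" +
  assumes scale_mult_left: "sm c (x * y) = sm c x * y"
    and scale_mult_right: "sm c (x * y) = x * sm c y"

begin

lemma mmul_lsmul: "mmul N m (lsmul sm N m C X) Y = lsmul sm N m C (mmul N m X Y)"
  unfolding mmul_def lsmul_def fun_eq_iff
  by (simp add: sum_distrib_right scale_sum_right scale_mult_left) (rule allI, rule allI, rule sum.swap)

lemma mmul_rsmul: "mmul N m X (rsmul sm N m Y C) = rsmul sm N m (mmul N m X Y) C"
  unfolding mmul_def rsmul_def fun_eq_iff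
  by (simp add: sum_distrib_left scale_sum_right scale_mult_right) (rule allI, rule allI, rule sum.swap)

lemma mmul_rsmul_lsmul: "mmul N m (rsmul sm N m X C) Y = mmul N m X (lsmul sm N m C Y)"
  unfolding mmul_def rsmul_def lsmul_def fun_eq_iff
  by (simp add: sum_distrib_left sum_distrib_right scale_mult_left[symmetric] scale_mult_right[symmetric]) (rule allI, rule allI, rule sum.swap)

lemma commutes_mmul:
  assumes P: "commutes N m X P" and Q: "commutes N m X Q"
  shows "commutes N m X (mmul N m P Q)"
proof -
  have "opeq N m (lsmul sm N m X (mmul N m P Q)) (mmul N m (lsmul sm N m X P) Q)"
    by (simp only: mmul_lsmul opeq_refl)
  also have "opeq N m \<dots> (mmul N m (rsmul sm N m P X) Q)"
    using P unfolding commutes_def by (intro mmul_cong opeq_refl)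
  also have "opeq N m \<dots> (mmul N m P (lsmul sm N m X Q))"
    by (simp only: mmul_rsmul_lsmul opeq_refl)
  also have "opeq N m \<dots> (mmul N m P (rsmul sm N m Q X))"
    using Q unfolding commutes_def by (intro mmul_cong opeq_refl)
  also have "opeq N m \<dots> (rsmul sm N m (mmul N m P Q) X)"
    by (simp only: mmul_rsmul opeq_refl)
  finally show ?thesis unfolding commutes_def .
qed

end

lemma calgebra_calg: "calg sm \<Longrightarrow> calgebra sm"
  unfolding calg_def calgebra_def calgebra_axioms_def cmodule_def module_def by metis

section \<open>The Hecke condition and the q-antisymmetrizers\<close>

lemma qnum_1[simp]: "qnum (Suc 0) q = 1"
  by (simp add: qnum_def)

lemma qnum_Suc: assumes "q \<noteq> 0" shows "qnum (Suc k) q = q ^ k + qnum k q / q"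
proof -
  have "qnum (Suc k) q = (\<Sum>i<Suc k. q powi (int (Suc k) - 1 - 2 * int i))" by (simp add: qnum_def)
  also have "\<dots> = q powi (int k) + (\<Sum>i<k. q powi (int (Suc k) - 1 - 2 * int (Suc i)))"
    by (subst sum.lessThan_Suc_shift) simp
  also have "(\<Sum>i<k. q powi (int (Suc k) - 1 - 2 * int (Suc i))) = (\<Sum>i<k. q powi (int k - 1 - 2 * int i) / q)"
  proof (rule sum.cong[OF refl])
    fix i
    have e: "int (Suc k) - 1 - 2 * int (Suc i) = (int k - 1 - 2 * int i) + (-1)" by simp
    show "q powi (int (Suc k) - 1 - 2 * int (Suc i)) = q powi (int k - 1 - 2 * int i) / q"
      unfolding e using assms by (subst power_int_add) (simp_all add: divide_inverse)
  qed
  also have "\<dots> = qnum k q / q" by (simp add: qnum_def sum_divide_distrib)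
  finally show ?thesis by (simp add: power_int_of_nat)
qed

lemma qnum_2: "q \<noteq> 0 \<Longrightarrow> qnum 2 q = q + 1 / q"
  using qnum_Suc[of q 1] by (simp add: numeral_2_eq_2)

locale hecke =
  fixes N n :: nat and q :: complex and R S2 A2 :: "complex op"
  assumes q0: "q \<noteq> 0" and n1: "1 \<le> n"
    and ii1: "qadm 2 q"
    and ii2: "opeq N 2 (mmul N 2 S2 S2) S2"
    and ii4: "opeq N 2 (\<lambda>a b. S2 a b + A2 a b) idop"
    and ii5: "opeq N 2 R (\<lambda>a b. q * S2 a b - inverse q * A2 a b)"
    and i1: "opeq N 3 (mmul N 3 (mmul N 3 (emb [1,2] R) (emb [2,3] R)) (emb [1,2] R))
                      (mmul N 3 (mmul N 3 (emb [2,3] R) (emb [1,2] R)) (emb [2,3] R))"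
    and iii1: "qadm n q"

begin

abbreviation "Rpos i \<equiv> emb [i, Suc i] R"

abbreviation "Spos i \<equiv> emb [i, Suc i] S2"

abbreviation "Apos i \<equiv> emb [i, Suc i] A2"

abbreviation "Asym k \<equiv> emb [1..<Suc k] (asym N q R k)"

abbreviation "vact \<equiv> cplx.act N n"

lemma qnum_nonzero: "1 \<le> k \<Longrightarrow> k \<le> n \<Longrightarrow> qnum k q \<noteq> 0"
  using iii1 by (auto simp: qadm_def)

lemma q_plus_inverse_nonzero: "q + 1 / q \<noteq> 0"
  using ii1 qnum_2[OF q0] by (auto simp: qadm_def)

lemma Apos_eq_idop_minus_Spos:
  assumes i: "1 \<le> i" "Suc i \<le> n"
  shows "opeq N n (Apos i) (\<lambda>a b. idop a b - Spos i a b)"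
proof -
  have "opeq N 2 A2 (\<lambda>a b. idop a b - S2 a b)"
    using ii4 by (simp add: opeq_def algebra_simps)
  then have "opeq N n (Apos i) (emb [i, Suc i] (\<lambda>a b. idop a b - S2 a b))"
    using emb2_opeq i by blast
  also have "emb [i, Suc i] (\<lambda>a b. idop a b - S2 a b) = (\<lambda>a b. emb [i, Suc i] idop a b - Spos i a b)"
    by (rule emb_diff)
  also have "opeq N n \<dots> (\<lambda>a b. idop a b - Spos i a b)"
    by (rule opeq_diff[OF emb_idop_opeq opeq_refl]) (use i in auto)
  finally show ?thesis .
qed

lemma Rpos_eq_Spos:
  assumes i: "1 \<le> i" "Suc i \<le> n"
  shows "opeq N n (Rpos i) (\<lambda>a b. (q + 1 / q) * Spos i a b - (1 / q) * idop a b)"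
proof -
  have R: "opeq N n (Rpos i) (\<lambda>a b. q * Spos i a b - inverse q * Apos i a b)"
    using emb2_opeq[OF ii5 i] by (simp add: emb_diff emb_scal)
  show ?thesis unfolding opeq_def
  proof (intro ballI)
    fix a b assume ab: "a \<in> idx n N" "b \<in> idx n N"
    show "Rpos i a b = (q + 1 / q) * Spos i a b - (1 / q) * idop a b"
      using opeqD[OF R ab] opeqD[OF Apos_eq_idop_minus_Spos[OF i] ab]
      by (simp add: algebra_simps divide_inverse)
  qed
qed

lemma one_plus_q_sq_nonzero: "1 + q * q \<noteq> 0"
proof
  assume "1 + q * q = 0"
  then have "q + 1 / q = 0" using q0 by (simp add: field_simps)
  then show False using q_plus_inverse_nonzero by simp
qed

lemma Spos_eq_Rpos:
  assumes i: "1 \<le> i" "Suc i \<le> n"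
  shows "opeq N n (Spos i) (\<lambda>a b. (q / (1 + q * q)) * Rpos i a b + (1 / (1 + q * q)) * idop a b)"
  unfolding opeq_def
proof (intro ballI)
  fix a b assume ab: "a \<in> idx n N" "b \<in> idx n N"
  have "Rpos i a b = (q + 1 / q) * Spos i a b - (1 / q) * idop a b"
    by (rule opeqD[OF Rpos_eq_Spos[OF i] ab])
  then have "q * ((1 + q * q) * Spos i a b) = q * (q * Rpos i a b + idop a b)"
    using q0 by (simp add: field_simps)
  then have "(1 + q * q) * Spos i a b = q * Rpos i a b + idop a b"
    using q0 by simp
  then have "Spos i a b = (q * Rpos i a b + idop a b) / (1 + q * q)"
    using one_plus_q_sq_nonzero by (simp add: field_simps)
  then show "Spos i a b = (q / (1 + q * q)) * Rpos i a b + (1 / (1 + q * q)) * idop a b"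
    by (simp add: add_divide_distrib)
qed

lemma Apos_eq_Rpos:
  assumes i: "1 \<le> i" "Suc i \<le> n"
  shows "opeq N n (Apos i) (\<lambda>a b. (- (q / (1 + q * q))) * Rpos i a b + (1 - 1 / (1 + q * q)) * idop a b)"
  using Apos_eq_idop_minus_Spos[OF i] Spos_eq_Rpos[OF i] by (simp add: opeq_def algebra_simps)

lemma Spos_idem_vec:
  assumes i: "1 \<le> i" "Suc i \<le> n"
  shows "vact (Spos i) (vact (Spos i) v) = vact (Spos i) v"
proof -
  have "opeq N n (mmul N n (Spos i) (Spos i)) (Spos i)"
    using opeq_trans[OF opeq_sym[OF emb2_mmul[OF i]] emb2_opeq[OF ii2 i]] .
  then show ?thesis by (metis cplx.act_mmul cplx.act_opeq)
qed

lemma Apos_vec: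
  assumes i: "1 \<le> i" "Suc i \<le> n" and v: "cplx.is_vec N n v"
  shows "vact (Apos i) v = (\<lambda>a. v a - vact (Spos i) v a)"
  using cplx.act_opeq[OF Apos_eq_idop_minus_Spos[OF i]]
  by (simp add: cplx.act_diff_o cplx.act_idop[OF v])

lemma Rpos_vec:
  assumes i: "1 \<le> i" "Suc i \<le> n" and v: "cplx.is_vec N n v"
  shows "vact (Rpos i) v = (\<lambda>a. (q + 1 / q) * vact (Spos i) v a - (1 / q) * v a)"
proof -
  have "vact (Rpos i) v = vact (\<lambda>a b. (q + 1 / q) * Spos i a b - (1 / q) * idop a b) v"
    by (rule cplx.act_opeq[OF Rpos_eq_Spos[OF i]])
  then show ?thesis by (simp only: cplx.act_diff_o cplx.act_scal_o cplx.act_idop[OF v])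
qed

lemma Rpos_hecke_vec:
  assumes i: "1 \<le> i" "Suc i \<le> n" and v: "cplx.is_vec N n v"
  shows "vact (Rpos i) (vact (Rpos i) v) = (\<lambda>a. (q - 1 / q) * vact (Rpos i) v a + v a)"
proof -
  let ?s = "vact (Spos i) v"
  have r: "vact (Rpos i) v = (\<lambda>a. (q + 1 / q) * ?s a - (1 / q) * v a)" using Rpos_vec[OF i v] .
  have nr: "cplx.is_vec N n (vact (Rpos i) v)" by simp
  have "vact (Rpos i) (vact (Rpos i) v) = (\<lambda>a. (q + 1 / q) * vact (Spos i) (vact (Rpos i) v) a - (1 / q) * vact (Rpos i) v a)"
    using Rpos_vec[OF i nr] .
  also have "vact (Spos i) (vact (Rpos i) v) = (\<lambda>a. (q + 1 / q) * ?s a - (1 / q) * ?s a)"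
    unfolding r by (simp only: cplx.act_diff_v cplx.act_scal_v Spos_idem_vec[OF i])
  finally have f: "vact (Rpos i) (vact (Rpos i) v) = (\<lambda>a. (q + 1 / q) * ((q + 1 / q) * ?s a - 1 / q * ?s a) - 1 / q * vact (Rpos i) v a)" .
  have ra: "\<And>a. vact (Rpos i) v a = (q + 1 / q) * ?s a - (1 / q) * v a" using r by (simp add: fun_eq_iff)
  show ?thesis unfolding f fun_eq_iff ra using q0 by (simp add: field_simps)
qed

lemma Rpos_braid_vec:
  assumes i: "1 \<le> i" "Suc (Suc i) \<le> n"
  shows "vact (Rpos i) (vact (Rpos (Suc i)) (vact (Rpos i) v)) = vact (Rpos (Suc i)) (vact (Rpos i) (vact (Rpos (Suc i)) v))"
  using cplx.act_opeq[OF emb3_relation[OF i1 i]] by (simp only: cplx.act_mmul)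

lemma Rpos_Asym_commute_vec:
  assumes k: "1 \<le> k" "Suc k \<le> n"
  shows "vact (Rpos k) (vact (Asym (k - 1)) v) = vact (Asym (k - 1)) (vact (Rpos k) v)"
proof -
  have o1: "valid_pos n [k, Suc k]" using k by (auto simp: valid_pos_def)
  have o2: "valid_pos n [1..<Suc (k - 1)]" using k by (auto simp: valid_pos_def)
  have dj: "set [k, Suc k] \<inter> set [1..<Suc (k - 1)] = {}" using k by auto
  show ?thesis using mmul_emb_disjoint_commute[OF o1 o2 dj, of N R "asym N q R (k - 1)"]
    by (metis cplx.act_mmul cplx.act_opeq)
qed

lemma Asym_1: "opeq N n (Asym 1) idop"
  using emb_idop_opeq[of "[1..<Suc 1]" n N] n1 by simp

lemma Asym_1_vec: "cplx.is_vec N n v \<Longrightarrow> vact (Asym 1) v = v"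
  using cplx.act_opeq[OF Asym_1] cplx.act_idop by metis

lemma Asym_Suc:
  assumes k: "1 \<le> k" "Suc k \<le> n"
  shows "opeq N n (Asym (Suc k)) (\<lambda>a b. (1 / qnum (Suc k) q) *
           mmul N n (mmul N n (Asym k) (\<lambda>a b. q ^ k * idop a b - qnum k q * Rpos k a b)) (Asym k) a b)"
proof -
  obtain k' where k': "k = Suc k'" using k by (cases k) auto
  let ?P = "[1..<Suc (Suc k)]"
  let ?A = "asym N q R k"
  let ?Z = "\<lambda>a b. q ^ k * idop a b - qnum k q * emb [k, Suc k] R a b"
  have okP: "valid_pos n ?P" using k by (intro valid_pos_prefix) simp
  have lP: "length ?P = Suc k" by simp
  have as: "asym N q R (Suc k) = (\<lambda>a b. asym_step N q R k ?A a b / qnum (Suc k) q)"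
    using k' by simp
  have e1: "Asym (Suc k) = (\<lambda>a b. emb ?P (asym_step N q R k ?A) a b / qnum (Suc k) q)"
    unfolding as by (rule emb_div)
  have "opeq N n (emb ?P (asym_step N q R k ?A))
      (mmul N n (mmul N n (emb ?P (emb [1..<Suc k] ?A)) (emb ?P ?Z)) (emb ?P (emb [1..<Suc k] ?A)))"
    using emb_mmul3[OF okP, of N "emb [1..<Suc k] ?A" ?Z "emb [1..<Suc k] ?A"]
    unfolding asym_step_def lP .
  also have "opeq N n \<dots> (mmul N n (mmul N n (Asym k) (\<lambda>a b. q ^ k * idop a b - qnum k q * Rpos k a b)) (Asym k))"
  proof -
    have h1: "opeq N n (emb ?P (emb [1..<Suc k] ?A)) (Asym k)"
      using k by (intro emb_emb_prefix) auto
    have h2: "opeq N n (emb ?P ?Z) (\<lambda>a b. q ^ k * idop a b - qnum k q * Rpos k a b)"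
      unfolding emb_lin2 using k by (intro opeq_diff opeq_scal emb_idop_opeq emb_emb_prefix) auto
    show ?thesis by (intro mmul_cong h1 h2)
  qed
  finally have e2: "opeq N n (emb ?P (asym_step N q R k ?A))
     (mmul N n (mmul N n (Asym k) (\<lambda>a b. q ^ k * idop a b - qnum k q * Rpos k a b)) (Asym k))" .
  show ?thesis unfolding e1 using e2 by (simp add: opeq_def)
qed

lemma Asym_Suc_vec:
  assumes k: "1 \<le> k" "Suc k \<le> n"
  shows "vact (Asym (Suc k)) v = (\<lambda>a. (1 / qnum (Suc k) q) *
      (q ^ k * vact (Asym k) (vact (Asym k) v) a - qnum k q * vact (Asym k) (vact (Rpos k) (vact (Asym k) v)) a))"
proof -
  have "vact (Asym (Suc k)) v = vact (\<lambda>a b. (1 / qnum (Suc k) q) *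
           mmul N n (mmul N n (Asym k) (\<lambda>a b. q ^ k * idop a b - qnum k q * Rpos k a b)) (Asym k) a b) v"
    by (rule cplx.act_opeq[OF Asym_Suc[OF k]])
  also have "\<dots> = (\<lambda>a. (1 / qnum (Suc k) q) *
       vact (Asym k) (vact (\<lambda>a b. q ^ k * idop a b - qnum k q * Rpos k a b) (vact (Asym k) v)) a)"
    by (simp only: cplx.act_scal_o cplx.act_mmul)
  also have "vact (\<lambda>a b. q ^ k * idop a b - qnum k q * Rpos k a b) (vact (Asym k) v)
      = (\<lambda>a. q ^ k * vact (Asym k) v a - qnum k q * vact (Rpos k) (vact (Asym k) v) a)"
    by (simp only: cplx.act_diff_o cplx.act_scal_o cplx.act_idop[OF cplx.act_is_vec])
  finally show ?thesis by (simp only: cplx.act_diff_v cplx.act_scal_v)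
qed

definition is_q_antisymmetrizer :: "nat \<Rightarrow> bool" where
  "is_q_antisymmetrizer k \<longleftrightarrow>
     (\<forall>w. vact (Asym k) (vact (Asym k) w) = vact (Asym k) w) \<and>
     (\<forall>w i. 1 \<le> i \<longrightarrow> i < k \<longrightarrow> vact (Rpos i) (vact (Asym k) w) = (\<lambda>a. -(1/q) * vact (Asym k) w a))"

lemma Asym_1_q_antisymmetrizer: "is_q_antisymmetrizer 1"
  unfolding is_q_antisymmetrizer_def
proof (intro conjI allI impI)
  show "vact (Asym 1) (vact (Asym 1) w) = vact (Asym 1) w" for w by (rule Asym_1_vec) simp
qed auto

lemma Asym_Suc_vec_idem:
  assumes k: "1 \<le> k" "Suc k \<le> n" and A: "is_q_antisymmetrizer k"
  shows "vact (Asym (Suc k)) w = (\<lambda>a. (1 / qnum (Suc k) q) *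
      (q ^ k * vact (Asym k) w a - qnum k q * vact (Asym k) (vact (Rpos k) (vact (Asym k) w)) a))"
  using Asym_Suc_vec[OF k] A by (simp add: is_q_antisymmetrizer_def)

lemma Rpos_Asym_Rpos_Asym_vec_1:
  assumes n2: "Suc 1 \<le> n"
  shows "vact (Rpos 1) (vact (Asym 1) (vact (Rpos 1) (vact (Asym 1) x))) a
       = q * vact (Rpos 1) (vact (Asym 1) x) a + vact (Asym 1) x a
         - (1/q) * vact (Asym 1) (vact (Rpos 1) (vact (Asym 1) x)) a"
proof -
  let ?y = "vact (Asym 1) x"
  have i: "1 \<le> (1::nat)" "Suc 1 \<le> n" using n2 by auto
  have "vact (Asym 1) (vact (Rpos 1) ?y) = vact (Rpos 1) ?y" by (rule Asym_1_vec) simp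
  moreover have "vact (Rpos 1) (vact (Rpos 1) ?y) a = (q - 1/q) * vact (Rpos 1) ?y a + ?y a"
    using Rpos_hecke_vec[OF i cplx.act_is_vec] by simp
  ultimately show ?thesis using q0 by (simp add: field_simps)
qed

lemma Rpos_Asym_Rpos_Rpos_eigen:
  assumes j: "1 \<le> j" "Suc (Suc j) \<le> n"
    and y: "vact (Rpos j) y = (\<lambda>a. -(1/q) * y a)"
  shows "vact (Rpos (Suc j)) (vact (Asym j) (vact (Rpos j) (vact (Rpos (Suc j)) y)))
       = (\<lambda>a. -(1/q) * vact (Asym j) (vact (Rpos j) (vact (Rpos (Suc j)) y)) a)"
proof -
  let ?R = "Rpos (Suc j)" and ?R' = "Rpos j"
  have "vact ?R (vact (Asym j) (vact ?R' (vact ?R y))) = vact (Asym j) (vact ?R (vact ?R' (vact ?R y)))"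
    using Rpos_Asym_commute_vec[of "Suc j"] j by simp
  also have "vact ?R (vact ?R' (vact ?R y)) = vact ?R' (vact ?R (vact ?R' y))"
    using Rpos_braid_vec[OF j, of y] by simp
  also have "\<dots> = (\<lambda>a. -(1/q) * vact ?R' (vact ?R y) a)"
    unfolding y by (simp only: cplx.act_scal_v)
  finally show ?thesis by (simp only: cplx.act_scal_v)
qed

lemma Rpos_Asym_Rpos_Asym_vec_Suc:
  assumes j: "1 \<le> j" "Suc (Suc j) \<le> n"
    and A: "is_q_antisymmetrizer (Suc j)" and A': "is_q_antisymmetrizer j"
  shows "qnum (Suc j) q * vact (Rpos (Suc j)) (vact (Asym (Suc j)) (vact (Rpos (Suc j)) (vact (Asym (Suc j)) x))) a
       = q ^ Suc j * vact (Rpos (Suc j)) (vact (Asym (Suc j)) x) a + q ^ j * vact (Asym (Suc j)) x a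
         - (1/q) * qnum (Suc j) q * vact (Asym (Suc j)) (vact (Rpos (Suc j)) (vact (Asym (Suc j)) x)) a"
proof -
  let ?A = "Asym (Suc j)" and ?A' = "Asym j" and ?R = "Rpos (Suc j)" and ?R' = "Rpos j"
  let ?c1 = "qnum (Suc j) q" and ?c0 = "qnum j q" and ?p = "q ^ j"
  have j1: "1 \<le> j" "Suc j \<le> n" using j by auto
  have c1: "?c1 \<noteq> 0" using qnum_nonzero[of "Suc j"] j by simp
  have idA': "\<And>w. vact ?A' (vact ?A' w) = vact ?A' w" using A' by (simp add: is_q_antisymmetrizer_def)
  have recA: "\<And>w a. ?c1 * vact ?A w a = ?p * vact ?A' w a - ?c0 * vact ?A' (vact ?R' (vact ?A' w)) a"
    using Asym_Suc_vec_idem[OF j1 A'] c1 by (simp add: field_simps)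
  have comm: "\<And>w. vact ?R (vact ?A' w) = vact ?A' (vact ?R w)"
    using Rpos_Asym_commute_vec[of "Suc j"] j by simp
  let ?y = "vact ?A x"
  let ?Ry = "vact ?R ?y"
  have "vact ?A' ?y = ?y"
    by (subst (1 2) Asym_Suc_vec_idem[OF j1 A']) (simp only: cplx.act_scal_v cplx.act_diff_v idA')
  then have A'Ry: "vact ?A' ?Ry = ?Ry" using comm[of ?y] by simp
  let ?Z = "vact ?A' (vact ?R' ?Ry)"
  let ?T = "vact ?A ?Ry"
  have cT: "\<And>a. ?c1 * ?T a = ?p * ?Ry a - ?c0 * ?Z a"
    using recA[of ?Ry] A'Ry by simp
  then have T: "?T = (\<lambda>a. (1 / ?c1) * (?p * ?Ry a - ?c0 * ?Z a))"
    using c1 by (simp add: fun_eq_iff field_simps)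
  have RRy: "vact ?R ?Ry = (\<lambda>a. (q - 1/q) * ?Ry a + ?y a)"
    using Rpos_hecke_vec[of "Suc j" ?y] j by simp
  have "vact ?R' ?y = (\<lambda>a. -(1/q) * ?y a)"
    using A j by (simp add: is_q_antisymmetrizer_def)
  then have RZ: "vact ?R ?Z = (\<lambda>a. -(1/q) * ?Z a)"
    by (rule Rpos_Asym_Rpos_Rpos_eigen[OF j])
  have "vact ?R ?T = (\<lambda>a. (1 / ?c1) * (?p * ((q - 1/q) * ?Ry a + ?y a) - ?c0 * (-(1/q) * ?Z a)))"
    unfolding T by (simp only: cplx.act_scal_v cplx.act_diff_v RRy RZ)
  then have lhs: "?c1 * vact ?R ?T a = ?p * ((q - 1/q) * ?Ry a + ?y a) + (?c0 / q) * ?Z a"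
    using c1 q0 by (simp add: field_simps)
  have rhs: "(1/q) * ?c1 * ?T a = (1/q) * (?p * ?Ry a - ?c0 * ?Z a)"
    using cT[of a] by (simp only: mult.assoc)
  show ?thesis unfolding lhs rhs using q0 by (simp add: field_simps)
qed

lemma Rpos_Asym_Rpos_Asym_vec:
  assumes k: "1 \<le> k" "Suc k \<le> n"
    and A: "is_q_antisymmetrizer k" and A': "2 \<le> k \<Longrightarrow> is_q_antisymmetrizer (k - 1)"
  shows "qnum k q * vact (Rpos k) (vact (Asym k) (vact (Rpos k) (vact (Asym k) x))) a
       = q ^ k * vact (Rpos k) (vact (Asym k) x) a + q ^ (k - 1) * vact (Asym k) x a
         - (1/q) * qnum k q * vact (Asym k) (vact (Rpos k) (vact (Asym k) x)) a"
proof (cases "k = 1")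
  case True
  then show ?thesis using Rpos_Asym_Rpos_Asym_vec_1 k by simp
next
  case False
  then obtain j where j: "k = Suc j" "1 \<le> j" using k by (cases k) auto
  then show ?thesis using Rpos_Asym_Rpos_Asym_vec_Suc[of j] k A A' by simp
qed

lemma Rpos_Asym_Suc_vec:
  assumes k: "1 \<le> k" "Suc k \<le> n"
    and A: "is_q_antisymmetrizer k" and A': "2 \<le> k \<Longrightarrow> is_q_antisymmetrizer (k - 1)"
  shows "vact (Rpos k) (vact (Asym (Suc k)) x) = (\<lambda>a. -(1/q) * vact (Asym (Suc k)) x a)"
proof
  fix a
  let ?A = "Asym k" and ?R = "Rpos k"
  let ?c = "qnum (Suc k) q" and ?c1 = "qnum k q" and ?p = "q ^ k"
  have c: "?c \<noteq> 0" using qnum_nonzero[of "Suc k"] k by simp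
  have pp: "?p = q * q ^ (k - 1)" using k by (cases k) auto
  have key: "?c1 * vact ?R (vact ?A (vact ?R (vact ?A x))) a
     = ?p * vact ?R (vact ?A x) a + q ^ (k - 1) * vact ?A x a - (1/q) * ?c1 * vact ?A (vact ?R (vact ?A x)) a"
    by (rule Rpos_Asym_Rpos_Asym_vec[OF k A A'])
  have "vact ?R (vact (Asym (Suc k)) x) a
      = (1 / ?c) * (?p * vact ?R (vact ?A x) a - ?c1 * vact ?R (vact ?A (vact ?R (vact ?A x))) a)"
    unfolding Asym_Suc_vec_idem[OF k A] by (simp only: cplx.act_scal_v cplx.act_diff_v)
  also have "\<dots> = -(1/q) * vact (Asym (Suc k)) x a"
    unfolding Asym_Suc_vec_idem[OF k A] key pp using q0 c
    by (simp add: field_simps)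
  finally show "vact ?R (vact (Asym (Suc k)) x) a = -(1/q) * vact (Asym (Suc k)) x a" .
qed

lemma Asym_Suc_q_antisymmetrizer:
  assumes k: "1 \<le> k" "Suc k \<le> n"
    and A: "is_q_antisymmetrizer k" and A': "2 \<le> k \<Longrightarrow> is_q_antisymmetrizer (k - 1)"
  shows "is_q_antisymmetrizer (Suc k)"
proof -
  let ?A = "Asym k" and ?B = "Asym (Suc k)" and ?R = "Rpos k"
  let ?c = "qnum (Suc k) q" and ?c1 = "qnum k q" and ?p = "q ^ k"
  have c: "?c \<noteq> 0" using qnum_nonzero[of "Suc k"] k by simp
  have cq: "?c = ?p + ?c1 / q" by (rule qnum_Suc[OF q0])
  have idA: "\<And>w. vact ?A (vact ?A w) = vact ?A w" and
    RiA: "\<And>w i. 1 \<le> i \<Longrightarrow> i < k \<Longrightarrow> vact (Rpos i) (vact ?A w) = (\<lambda>a. -(1/q) * vact ?A w a)"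
    using A by (auto simp: is_q_antisymmetrizer_def)
  have B: "\<And>x. vact ?B x = (\<lambda>a. (1 / ?c) * (?p * vact ?A x a - ?c1 * vact ?A (vact ?R (vact ?A x)) a))"
    by (rule Asym_Suc_vec_idem[OF k A])
  have RB: "\<And>x. vact ?R (vact ?B x) = (\<lambda>a. -(1/q) * vact ?B x a)"
    by (rule Rpos_Asym_Suc_vec[OF k A A'])
  have RiB: "vact (Rpos i) (vact ?B x) = (\<lambda>a. -(1/q) * vact ?B x a)" if i: "1 \<le> i" "i < k" for x i
    unfolding B by (simp only: cplx.act_scal_v cplx.act_diff_v RiA[OF i]) (simp add: fun_eq_iff algebra_simps)
  have AB: "vact ?A (vact ?B x) = vact ?B x" for x
    by (subst (1 2) B) (simp only: cplx.act_scal_v cplx.act_diff_v idA)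
  have idB: "vact ?B (vact ?B x) = vact ?B x" for x
  proof -
    have "vact ?B (vact ?B x) = (\<lambda>a. (1 / ?c) * (?p * vact ?B x a - ?c1 * (-(1/q) * vact ?B x a)))"
      unfolding B[of "vact ?B x"] by (simp only: AB RB cplx.act_scal_v)
    also have "\<dots> = vact ?B x"
    proof
      fix a
      have "?p * vact ?B x a - ?c1 * (-(1/q) * vact ?B x a) = ?c * vact ?B x a"
        unfolding cq using q0 by (simp add: field_simps)
      then show "(1 / ?c) * (?p * vact ?B x a - ?c1 * (-(1/q) * vact ?B x a)) = vact ?B x a"
        using c by simp
    qed
    finally show ?thesis .
  qed
  show ?thesis
    unfolding is_q_antisymmetrizer_def
    using idB RB RiB by (auto simp: less_Suc_eq)
qed

lemma Asym_q_antisymmetrizer: "1 \<le> k \<Longrightarrow> k \<le> n \<Longrightarrow> is_q_antisymmetrizer k"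
proof (induction k rule: less_induct)
  case (less k)
  show ?case
  proof (cases "k = 1")
    case True
    then show ?thesis using Asym_1_q_antisymmetrizer by simp
  next
    case False
    then obtain k' where k': "k = Suc k'" "1 \<le> k'" using less.prems by (cases k) auto
    then show ?thesis
      using less.IH less.prems by (auto intro!: Asym_Suc_q_antisymmetrizer)
  qed
qed

lemma Asym_n: "opeq N n (Asym n) (asym N q R n)"
  unfolding opeq_def by (intro ballI emb_full) auto

lemma Apos_asym:
  assumes i: "1 \<le> i" "i < n"
  shows "opeq N n (mmul N n (Apos i) (asym N q R n)) (asym N q R n)"
proof -
  have Hn: "\<And>w. vact (Rpos i) (vact (asym N q R n) w) = (\<lambda>a. -(1/q) * vact (asym N q R n) w a)"
  proof -
    fix w
    have "vact (Rpos i) (vact (Asym n) w) = (\<lambda>a. -(1/q) * vact (Asym n) w a)"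
      using Asym_q_antisymmetrizer[of n] n1 i by (simp add: is_q_antisymmetrizer_def)
    then show "?thesis w" by (simp only: cplx.act_opeq[OF Asym_n])
  qed
  have i': "1 \<le> i" "Suc i \<le> n" using i by auto
  show ?thesis
  proof (rule opeq_by_act)
    fix w
    let ?y = "vact (asym N q R n) w"
    have ny: "cplx.is_vec N n ?y" by simp
    have Sy: "vact (Spos i) ?y = (\<lambda>a. 0)"
    proof
      fix a
      have "(q + 1 / q) * vact (Spos i) ?y a - (1 / q) * ?y a = -(1/q) * ?y a"
        using fun_cong[OF Rpos_vec[OF i' ny], of a] fun_cong[OF Hn, of w a] by simp
      then have "(q + 1 / q) * vact (Spos i) ?y a = 0" by simp
      then show "vact (Spos i) ?y a = 0" using q_plus_inverse_nonzero by simp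
    qed
    show "vact (mmul N n (Apos i) (asym N q R n)) w = vact (asym N q R n) w"
      unfolding cplx.act_mmul Apos_vec[OF i' ny] Sy by simp
  qed
qed

end

locale hecke_module = hecke N n q R S2 A2 + cmodule sm
  for N n :: nat and q :: complex and R S2 A2 :: "complex op" and sm :: "complex \<Rightarrow> 'b::ab_group_add \<Rightarrow> 'b"

begin

lemma Asym_fixes_eigenvector:
  assumes w: "is_vec N n w" and Rw: "\<And>i. 1 \<le> i \<Longrightarrow> i < n \<Longrightarrow> act N n (Rpos i) w = (\<lambda>a. sm (-(1/q)) (w a))"
  shows "1 \<le> k \<Longrightarrow> k \<le> n \<Longrightarrow> act N n (Asym k) w = w"
proof (induction k)
  case 0 then show ?case by simp
next
  case (Suc k)
  show ?case
  proof (cases "k = 0")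
    case True then show ?thesis using act_opeq[OF Asym_1] act_idop[OF w] by simp
  next
    case False
    then have k: "1 \<le> k" "Suc k \<le> n" using Suc.prems by auto
    have IH: "act N n (Asym k) w = w" using Suc.IH k by simp
    let ?c = "qnum (Suc k) q" and ?c1 = "qnum k q"
    have c: "?c \<noteq> 0" using qnum_nonzero[of "Suc k"] k by simp
    have cq: "?c = q ^ k + ?c1 / q" by (rule qnum_Suc[OF q0])
    have Rk: "act N n (Rpos k) w = (\<lambda>a. sm (-(1/q)) (w a))" using Rw k by simp
    have "act N n (Asym (Suc k)) w = act N n (\<lambda>a b. (1 / ?c) *
           mmul N n (mmul N n (Asym k) (\<lambda>a b. q ^ k * idop a b - ?c1 * Rpos k a b)) (Asym k) a b) w"
      by (rule act_opeq[OF Asym_Suc[OF k]])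
    also have "\<dots> = (\<lambda>a. sm (1 / ?c) (act N n (Asym k) (act N n (\<lambda>a b. q ^ k * idop a b - ?c1 * Rpos k a b) w) a))"
      by (simp only: act_scal_o act_mmul IH)
    also have "act N n (\<lambda>a b. q ^ k * idop a b - ?c1 * Rpos k a b) w = (\<lambda>a. sm (q ^ k) (w a) - sm ?c1 (sm (-(1/q)) (w a)))"
      by (simp only: act_diff_o act_scal_o act_idop[OF w] Rk)
    also have "\<dots> = (\<lambda>a. sm ?c (w a))"
      unfolding cq by (simp add: scale_left_distrib[symmetric] divide_inverse)
    also have "act N n (Asym k) (\<lambda>a. sm ?c (w a)) = (\<lambda>a. sm ?c (w a))"
      by (simp only: act_scal_v IH)
    finally show ?thesis using c by simp
  qed
qed

lemma asym_fixes_Spos_annihilated: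
  assumes Y: "\<And>i. 1 \<le> i \<Longrightarrow> i < n \<Longrightarrow> opeq N n (lsmul sm N n (Spos i) Y) (\<lambda>a b. 0)"
  shows "opeq N n (lsmul sm N n (asym N q R n) Y) Y"
  unfolding opeq_def
proof (intro ballI)
  fix a b assume a: "a \<in> idx n N" and b: "b \<in> idx n N"
  define w where "w c = (if c \<in> idx n N then Y c b else 0)" for c
  have nw: "is_vec N n w" by (simp add: is_vec_def w_def)
  have Sw: "act N n (Spos i) w = (\<lambda>a. 0)" if i: "1 \<le> i" "i < n" for i
  proof
    fix x
    show "act N n (Spos i) w x = 0"
    proof (cases "x \<in> idx n N")
      case True
      have "act N n (Spos i) w = act N n (Spos i) (\<lambda>c. Y c b)" by (rule act_cong) (simp add: w_def)
      then show ?thesis using lsmul_column[OF True] opeqD[OF Y[OF i] True b] by simp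
    qed (simp add: act_def)
  qed
  have Rw: "act N n (Rpos i) w = (\<lambda>a. sm (-(1/q)) (w a))" if i: "1 \<le> i" "i < n" for i
  proof -
    have "act N n (Rpos i) w = act N n (\<lambda>a b. (q + 1 / q) * Spos i a b - (1 / q) * idop a b) w"
      by (rule act_opeq) (use Rpos_eq_Spos i in auto)
    also have "\<dots> = (\<lambda>a. sm (q + 1 / q) (act N n (Spos i) w a) - sm (1 / q) (w a))"
      by (simp only: act_diff_o act_scal_o act_idop[OF nw])
    finally show ?thesis by (simp add: Sw[OF i] scale_minus_left)
  qed
  have "act N n (Asym n) w = w"
    using Asym_fixes_eigenvector[OF nw Rw, of n] n1 by simp
  then have "act N n (asym N q R n) w a = w a" by (simp only: act_opeq[OF Asym_n])
  moreover have "act N n (asym N q R n) w a = lsmul sm N n (asym N q R n) Y a b"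
    using a by (simp add: lsmul_def act_def w_def)
  ultimately show "lsmul sm N n (asym N q R n) Y a b = Y a b"
    using a by (simp add: w_def)
qed

end

section \<open>Half-quantum matrices\<close>

lemma Mbar_Suc: "1 \<le> j \<Longrightarrow> Mbar sm N m F Finv M (Suc j) =
   lsmul sm N m (emb [j, Suc j] F) (rsmul sm N m (Mbar sm N m F Finv M j) (emb [j, Suc j] Finv))"
  by (cases j) auto

lemma Mprod_Suc: "1 \<le> k \<Longrightarrow> Mprod sm N m F Finv M (Suc k) =
   mmul N m (Mprod sm N m F Finv M k) (Mbar sm N m F Finv M (Suc k))"
  by (cases k) auto

lemma Mbar2_1: "Mbar sm N 2 F Finv M 1 = emb [1] M"
  by (simp add: One_nat_def)

lemma Mbar2_2: "Mbar sm N 2 F Finv M 2 = lsmul sm N 2 (emb [1, 2] F) (rsmul sm N 2 (emb [1] M) (emb [1, 2] Finv))"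
  by (simp add: numeral_2_eq_2 One_nat_def)

locale half_quantum = hecke_module N n q R S2 A2 sm + calgebra sm
  for N n :: nat and q :: complex and R S2 A2 :: "complex op" and sm :: "complex \<Rightarrow> 'a::ring \<Rightarrow> 'a" +
  fixes F Finv :: "complex op" and M :: "'a op"
  assumes Finv1: "opeq N 2 (mmul N 2 F Finv) idop"
    and Finv2: "opeq N 2 (mmul N 2 Finv F) idop"
    and i2: "opeq N 3 (mmul N 3 (mmul N 3 (emb [1,2] F) (emb [2,3] F)) (emb [1,2] F))
                      (mmul N 3 (mmul N 3 (emb [2,3] F) (emb [1,2] F)) (emb [2,3] F))"
    and i3: "opeq N 3 (mmul N 3 (mmul N 3 (emb [1,2] R) (emb [2,3] F)) (emb [1,2] F))
                      (mmul N 3 (mmul N 3 (emb [2,3] F) (emb [1,2] F)) (emb [2,3] R))"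
    and i4: "opeq N 3 (mmul N 3 (mmul N 3 (emb [1,2] F) (emb [2,3] F)) (emb [1,2] R))
                      (mmul N 3 (mmul N 3 (emb [2,3] R) (emb [1,2] F)) (emb [2,3] F))"
    and hq: "opeq N 2 (lsmul sm N 2 S2 (rsmul sm N 2
                 (mmul N 2 (Mbar sm N 2 F Finv M 1) (Mbar sm N 2 F Finv M 2)) A2)) (\<lambda>a b. 0)"

begin

abbreviation "Fpos i \<equiv> emb [i, Suc i] F"

abbreviation "Finvpos i \<equiv> emb [i, Suc i] Finv"

abbreviation "Mb j \<equiv> Mbar sm N n F Finv M j"

abbreviation "Mp k \<equiv> Mprod sm N n F Finv M k"

lemma Fpos_Finvpos: "1 \<le> i \<Longrightarrow> Suc i \<le> n \<Longrightarrow> opeq N n (mmul N n (Fpos i) (Finvpos i)) idop"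
  by (rule emb2_inverse[OF Finv1])

lemma Finvpos_Fpos: "1 \<le> i \<Longrightarrow> Suc i \<le> n \<Longrightarrow> opeq N n (mmul N n (Finvpos i) (Fpos i)) idop"
  by (rule emb2_inverse[OF Finv2])

lemma commutes_Mbar_Suc_disjoint:
  assumes IH: "commutes N n (emb [i, Suc i] X) (Mb j)"
    and i: "1 \<le> i" "Suc i \<le> n" and j: "1 \<le> j" "Suc j \<le> n" and dj: "Suc i < j \<or> Suc j < i"
  shows "commutes N n (emb [i, Suc i] X) (Mb (Suc j))"
proof -
  have oi: "valid_pos n [i, Suc i]" and oj: "valid_pos n [j, Suc j]"
    using i j by (auto simp: valid_pos_def)
  have dj': "set [i, Suc i] \<inter> set [j, Suc j] = {}" using dj by auto
  have "opeq N n (mmul N n (emb [i, Suc i] X) (Fpos j)) (mmul N n (Fpos j) (emb [i, Suc i] X))"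
    and "opeq N n (mmul N n (Finvpos j) (emb [i, Suc i] X)) (mmul N n (emb [i, Suc i] X) (Finvpos j))"
    by (rule mmul_emb_disjoint_commute[OF oi oj dj'], rule opeq_sym[OF mmul_emb_disjoint_commute[OF oi oj dj']])
  then show ?thesis unfolding Mbar_Suc[OF j(1)] by (rule commutes_conj[OF IH])
qed

lemma commutes_Mbar_low: "1 \<le> j \<Longrightarrow> j < i \<Longrightarrow> Suc i \<le> n \<Longrightarrow> commutes N n (emb [i, Suc i] X) (Mb j)"
proof (induction j)
  case 0 then show ?case by simp
next
  case (Suc j)
  show ?case
  proof (cases "j = 0")
    case True
    have "valid_pos n [i, Suc i]" "valid_pos n [1]" using Suc.prems by (auto simp: valid_pos_def)
    then have "commutes N n (emb [i, Suc i] X) (emb [1] M)"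
      by (rule commutes_emb_disjoint) (use Suc.prems in auto)
    then show ?thesis using True by simp
  next
    case False
    then show ?thesis using Suc by (intro commutes_Mbar_Suc_disjoint) auto
  qed
qed

lemma commutes_Mbar_high:
  assumes X3: "opeq N 3 (mmul N 3 (mmul N 3 (emb [1,2] X) (emb [2,3] F)) (emb [1,2] F))
                      (mmul N 3 (mmul N 3 (emb [2,3] F) (emb [1,2] F)) (emb [2,3] X))"
    and i: "1 \<le> i" and j: "Suc (Suc i) \<le> j"
  shows "j \<le> n \<Longrightarrow> commutes N n (emb [i, Suc i] X) (Mb j)"
  using j
proof (induction j rule: dec_induct)
  case base
  let ?U = "mmul N n (Fpos (Suc i)) (Fpos i)" and ?V = "mmul N n (Finvpos i) (Finvpos (Suc i))"
  have i2: "1 \<le> i" "Suc (Suc i) \<le> n" using i base by auto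
  then have i1: "1 \<le> Suc i" "Suc (Suc i) \<le> n" and i0: "1 \<le> i" "Suc i \<le> n" by auto
  have eqMb: "Mb (Suc (Suc i)) = lsmul sm N n ?U (rsmul sm N n (Mb i) ?V)"
    using i by (simp only: Mbar_Suc[of "Suc i"] Mbar_Suc[of i] le_SucI lsmul_rsmul[symmetric] lsmul_lsmul rsmul_rsmul)
  have Y: "commutes N n (emb [Suc i, Suc (Suc i)] X) (Mb i)"
    by (rule commutes_Mbar_low) (use i2 in auto)
  have XC: "opeq N n (mmul N n (emb [i, Suc i] X) ?U) (mmul N n ?U (emb [Suc i, Suc (Suc i)] X))"
    using emb3_relation[OF X3 i2] by (simp only: mmul_assoc)
  have UV: "opeq N n (mmul N n ?U ?V) idop" by (rule mmul_inverse_prod[OF Fpos_Finvpos[OF i0] Fpos_Finvpos[OF i1]])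
  have VU: "opeq N n (mmul N n ?V ?U) idop" by (rule mmul_inverse_prod[OF Finvpos_Fpos[OF i1] Finvpos_Fpos[OF i0]])
  have DX: "opeq N n (mmul N n ?V (emb [i, Suc i] X)) (mmul N n (emb [Suc i, Suc (Suc i)] X) ?V)"
    by (rule conj_by_inverse[OF XC UV VU])
  show ?case unfolding eqMb by (rule commutes_conj[OF Y XC DX])
next
  case (step j)
  then show ?case using i by (intro commutes_Mbar_Suc_disjoint) auto
qed

lemma commutes_Apos: assumes i: "1 \<le> i" "Suc i \<le> n" and c: "commutes N n (Rpos i) Y" shows "commutes N n (Apos i) Y"
proof -
  have "commutes N n (\<lambda>a b. (- (q / (1 + q * q))) * Rpos i a b + (1 - 1 / (1 + q * q)) * idop a b) Y" by (rule commutes_lincomb[OF c commutes_idop])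
  then show ?thesis by (rule commutes_opeq[OF opeq_sym[OF Apos_eq_Rpos[OF i]]])
qed

lemma commutes_Rpos_Mbar_high: "1 \<le> i \<Longrightarrow> Suc (Suc i) \<le> j \<Longrightarrow> j \<le> n \<Longrightarrow> commutes N n (Rpos i) (Mb j)"
  by (rule commutes_Mbar_high[OF i3])

lemma commutes_Fpos_Mbar_high: "1 \<le> i \<Longrightarrow> Suc (Suc i) \<le> j \<Longrightarrow> j \<le> n \<Longrightarrow> commutes N n (Fpos i) (Mb j)"
  by (rule commutes_Mbar_high[OF i2])

lemma commutes_Finvpos_Mbar_high: "1 \<le> i \<Longrightarrow> Suc (Suc i) \<le> j \<Longrightarrow> j \<le> n \<Longrightarrow> commutes N n (Finvpos i) (Mb j)"
  by (rule commutes_inverse[OF commutes_Fpos_Mbar_high Fpos_Finvpos Finvpos_Fpos]) auto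

lemma emb12_Mbar:
  assumes n2: "Suc 1 \<le> n"
  shows "opeq N n (emb [1, Suc 1] (Mbar sm N 2 F Finv M 1)) (Mb 1)"
    and "opeq N n (emb [1, Suc 1] (Mbar sm N 2 F Finv M 2)) (Mb (Suc 1))"
proof -
  let ?P = "[1, Suc 1]"
  have i: "1 \<le> (1::nat)" "Suc 1 \<le> n" using n2 by auto
  show e1: "opeq N n (emb ?P (Mbar sm N 2 F Finv M 1)) (Mb 1)"
    using emb12_emb[OF n2, where N = N and qs = "[1]" and X = M] by (simp add: One_nat_def)
  have e12: "\<And>Z. opeq N n (emb ?P (emb [1, 2] Z)) (emb [1, Suc 1] Z)"
    using emb12_emb[OF n2, where N = N and qs = "[1,2]"] by (simp add: One_nat_def numeral_2_eq_2)
  have "opeq N n (emb ?P (Mbar sm N 2 F Finv M 2))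
      (lsmul sm N n (emb ?P (emb [1, 2] F)) (emb ?P (rsmul sm N 2 (emb [1] M) (emb [1, 2] Finv))))"
    unfolding Mbar2_2 by (rule emb2_lsmul[OF i])
  also have "opeq N n \<dots> (lsmul sm N n (emb ?P (emb [1, 2] F)) (rsmul sm N n (emb ?P (emb [1] M)) (emb ?P (emb [1, 2] Finv))))"
    by (intro lsmul_cong opeq_refl emb2_rsmul[OF i])
  also have "opeq N n \<dots> (lsmul sm N n (Fpos 1) (rsmul sm N n (Mb 1) (Finvpos 1)))"
    using e1 by (intro lsmul_cong rsmul_cong e12) (simp add: Mbar2_1)
  also have "lsmul sm N n (Fpos 1) (rsmul sm N n (Mb 1) (Finvpos 1)) = Mb (Suc 1)"
    by (simp only: Mbar_Suc[of 1] le_refl)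
  finally show "opeq N n (emb ?P (Mbar sm N 2 F Finv M 2)) (Mb (Suc 1))" .
qed

lemma Mbar_pair_half_quantum_1:
  assumes n2: "Suc 1 \<le> n"
  shows "opeq N n (lsmul sm N n (Spos 1) (rsmul sm N n (mmul N n (Mb 1) (Mb (Suc 1))) (Apos 1))) (\<lambda>a b. 0)"
proof -
  let ?P = "[1, Suc 1]" and ?X1 = "Mbar sm N 2 F Finv M 1" and ?X2 = "Mbar sm N 2 F Finv M 2"
  have i: "1 \<le> (1::nat)" "Suc 1 \<le> n" using n2 by auto
  have "opeq N n (lsmul sm N n (Spos 1) (rsmul sm N n (mmul N n (Mb 1) (Mb (Suc 1))) (Apos 1)))
      (lsmul sm N n (emb ?P S2) (rsmul sm N n (mmul N n (emb ?P ?X1) (emb ?P ?X2)) (emb ?P A2)))"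
    by (intro lsmul_cong rsmul_cong mmul_cong opeq_refl opeq_sym[OF emb12_Mbar(1)[OF n2]]
        opeq_sym[OF emb12_Mbar(2)[OF n2]])
  also have "opeq N n \<dots> (lsmul sm N n (emb ?P S2) (rsmul sm N n (emb ?P (mmul N 2 ?X1 ?X2)) (emb ?P A2)))"
    by (intro lsmul_cong rsmul_cong opeq_refl opeq_sym[OF emb2_mmul[OF i]])
  also have "opeq N n \<dots> (lsmul sm N n (emb ?P S2) (emb ?P (rsmul sm N 2 (mmul N 2 ?X1 ?X2) A2)))"
    by (intro lsmul_cong opeq_refl opeq_sym[OF emb2_rsmul[OF i]])
  also have "opeq N n \<dots> (emb ?P (lsmul sm N 2 S2 (rsmul sm N 2 (mmul N 2 ?X1 ?X2) A2)))"
    by (rule opeq_sym[OF emb2_lsmul[OF i]])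
  also have "opeq N n \<dots> (emb ?P (\<lambda>a b. 0))"
    by (rule emb2_opeq[OF hq i])
  finally show ?thesis by (simp only: emb_zero)
qed

abbreviation "Fpair i \<equiv> mmul N n (Fpos i) (Fpos (Suc i))"

abbreviation "Finvpair i \<equiv> mmul N n (Finvpos (Suc i)) (Finvpos i)"

lemma Fpair_Rpos:
  assumes i: "1 \<le> i" "Suc (Suc i) \<le> n"
  shows "opeq N n (mmul N n (Fpair i) (Rpos i)) (mmul N n (Rpos (Suc i)) (Fpair i))"
  using emb3_relation[OF i4 i] by (simp only: mmul_assoc)

lemma Fpair_Finvpair:
  assumes i: "1 \<le> i" "Suc (Suc i) \<le> n"
  shows "opeq N n (mmul N n (Fpair i) (Finvpair i)) idop"
  using i by (intro mmul_inverse_prod Fpos_Finvpos) auto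

lemma Finvpair_Fpair:
  assumes i: "1 \<le> i" "Suc (Suc i) \<le> n"
  shows "opeq N n (mmul N n (Finvpair i) (Fpair i)) idop"
  using i by (intro mmul_inverse_prod Finvpos_Fpos) auto

lemma Spos_Fpair:
  assumes i: "1 \<le> i" "Suc (Suc i) \<le> n"
  shows "opeq N n (mmul N n (Spos (Suc i)) (Fpair i)) (mmul N n (Fpair i) (Spos i))"
proof -
  have "opeq N n (mmul N n (Spos (Suc i)) (Fpair i))
      (mmul N n (\<lambda>a b. (q / (1 + q * q)) * Rpos (Suc i) a b + (1 / (1 + q * q)) * idop a b) (Fpair i))"
    using i by (intro mmul_cong opeq_refl Spos_eq_Rpos) auto
  also have "opeq N n \<dots> (mmul N n (Fpair i) (\<lambda>a b. (q / (1 + q * q)) * Rpos i a b + (1 / (1 + q * q)) * idop a b))"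
    by (rule opeq_sym[OF conj_lincomb_idop[OF Fpair_Rpos[OF i]]])
  also have "opeq N n \<dots> (mmul N n (Fpair i) (Spos i))"
    using i by (intro mmul_cong opeq_refl opeq_sym[OF Spos_eq_Rpos]) auto
  finally show ?thesis .
qed

lemma Finvpair_Apos:
  assumes i: "1 \<le> i" "Suc (Suc i) \<le> n"
  shows "opeq N n (mmul N n (Finvpair i) (Apos (Suc i))) (mmul N n (Apos i) (Finvpair i))"
proof -
  have W'R: "opeq N n (mmul N n (Finvpair i) (Rpos (Suc i))) (mmul N n (Rpos i) (Finvpair i))"
    by (rule conj_by_inverse[OF opeq_sym[OF Fpair_Rpos[OF i]] Fpair_Finvpair[OF i] Finvpair_Fpair[OF i]])
  have "opeq N n (mmul N n (Finvpair i) (Apos (Suc i)))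
      (mmul N n (Finvpair i) (\<lambda>a b. (- (q / (1 + q * q))) * Rpos (Suc i) a b + (1 - 1 / (1 + q * q)) * idop a b))"
    using i by (intro mmul_cong opeq_refl Apos_eq_Rpos) auto
  also have "opeq N n \<dots> (mmul N n (\<lambda>a b. (- (q / (1 + q * q))) * Rpos i a b + (1 - 1 / (1 + q * q)) * idop a b) (Finvpair i))"
    by (rule conj_lincomb_idop[OF W'R])
  also have "opeq N n \<dots> (mmul N n (Apos i) (Finvpair i))"
    using i by (intro mmul_cong opeq_refl opeq_sym[OF Apos_eq_Rpos]) auto
  finally show ?thesis .
qed

lemma Mbar_pair_conj:
  assumes i: "1 \<le> i" "Suc (Suc i) \<le> n"
  shows "opeq N n (mmul N n (Mb (Suc i)) (Mb (Suc (Suc i))))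
           (lsmul sm N n (Fpair i) (rsmul sm N n (mmul N n (Mb i) (Mb (Suc i))) (Finvpair i)))"
proof -
  let ?ls = "lsmul sm N n" and ?rs = "rsmul sm N n"
  let ?Mi = "Mb i" and ?M1 = "Mb (Suc i)" and ?M2 = "Mb (Suc (Suc i))"
  have eM1: "?M1 = ?ls (Fpos i) (?rs ?Mi (Finvpos i))" by (rule Mbar_Suc[OF i(1)])
  have eM2: "?M2 = ?ls (Fpos (Suc i)) (?rs ?M1 (Finvpos (Suc i)))" by (rule Mbar_Suc) simp
  have cG: "commutes N n (Finvpos i) ?M2" by (rule commutes_Finvpos_Mbar_high) (use i in auto)
  have cF: "commutes N n (Fpos (Suc i)) ?Mi" by (rule commutes_Mbar_low) (use i in auto)
  have "opeq N n (mmul N n ?M1 ?M2) (?ls (Fpos i) (mmul N n ?Mi (?ls (Finvpos i) ?M2)))"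
    unfolding eM1 by (simp only: mmul_lsmul mmul_rsmul_lsmul opeq_refl)
  also have "opeq N n \<dots> (?ls (Fpos i) (mmul N n ?Mi (?rs ?M2 (Finvpos i))))"
    using cG unfolding commutes_def by (intro lsmul_cong mmul_cong opeq_refl)
  also have "opeq N n \<dots> (?ls (Fpos i) (?rs (mmul N n ?Mi ?M2) (Finvpos i)))"
    by (simp only: mmul_rsmul opeq_refl)
  also have "opeq N n \<dots> (?ls (Fpos i) (?rs (?ls (Fpos (Suc i)) (?rs (mmul N n ?Mi ?M1) (Finvpos (Suc i)))) (Finvpos i)))"
  proof (intro lsmul_cong rsmul_cong opeq_refl)
    have "opeq N n (mmul N n ?Mi ?M2) (mmul N n (?rs ?Mi (Fpos (Suc i))) (?rs ?M1 (Finvpos (Suc i))))"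
      unfolding eM2 by (simp only: mmul_rsmul_lsmul opeq_refl)
    also have "opeq N n \<dots> (mmul N n (?ls (Fpos (Suc i)) ?Mi) (?rs ?M1 (Finvpos (Suc i))))"
      using cF unfolding commutes_def by (intro mmul_cong opeq_refl) (rule opeq_sym)
    also have "opeq N n \<dots> (?ls (Fpos (Suc i)) (?rs (mmul N n ?Mi ?M1) (Finvpos (Suc i))))"
      by (simp only: mmul_lsmul mmul_rsmul lsmul_rsmul opeq_refl)
    finally show "opeq N n (mmul N n ?Mi ?M2) (?ls (Fpos (Suc i)) (?rs (mmul N n ?Mi ?M1) (Finvpos (Suc i))))" .
  qed
  also have "?ls (Fpos i) (?rs (?ls (Fpos (Suc i)) (?rs (mmul N n ?Mi ?M1) (Finvpos (Suc i)))) (Finvpos i))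
      = ?ls (Fpair i) (?rs (mmul N n ?Mi ?M1) (Finvpair i))"
    by (simp only: lsmul_lsmul rsmul_rsmul lsmul_rsmul[symmetric])
  finally show ?thesis .
qed

lemma Mbar_pair_half_quantum:
  "1 \<le> i \<Longrightarrow> Suc i \<le> n \<Longrightarrow>
   opeq N n (lsmul sm N n (Spos i) (rsmul sm N n (mmul N n (Mb i) (Mb (Suc i))) (Apos i))) (\<lambda>a b. 0)"
proof (induction i)
  case 0 then show ?case by simp
next
  case (Suc i)
  show ?case
  proof (cases "i = 0")
    case True then show ?thesis using Mbar_pair_half_quantum_1 Suc.prems by simp
  next
    case False
    let ?ls = "lsmul sm N n" and ?rs = "rsmul sm N n"
    let ?P = "mmul N n (Mb i) (Mb (Suc i))"
    have i: "1 \<le> i" "Suc (Suc i) \<le> n" using Suc.prems False by auto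
    have IH: "opeq N n (?ls (Spos i) (?rs ?P (Apos i))) (\<lambda>a b. 0)"
      using Suc.IH i by simp
    have "opeq N n (?ls (Spos (Suc i)) (?rs (mmul N n (Mb (Suc i)) (Mb (Suc (Suc i)))) (Apos (Suc i))))
        (?ls (Spos (Suc i)) (?rs (?ls (Fpair i) (?rs ?P (Finvpair i))) (Apos (Suc i))))"
      by (intro lsmul_cong rsmul_cong opeq_refl Mbar_pair_conj[OF i])
    also have "opeq N n \<dots> (?ls (mmul N n (Spos (Suc i)) (Fpair i)) (?rs ?P (mmul N n (Finvpair i) (Apos (Suc i)))))"
      by (simp only: lsmul_lsmul rsmul_rsmul lsmul_rsmul[symmetric] opeq_refl)
    also have "opeq N n \<dots> (?ls (mmul N n (Fpair i) (Spos i)) (?rs ?P (mmul N n (Apos i) (Finvpair i))))"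
      by (intro lsmul_cong rsmul_cong opeq_refl Spos_Fpair[OF i] Finvpair_Apos[OF i])
    also have "opeq N n \<dots> (?ls (Fpair i) (?rs (?ls (Spos i) (?rs ?P (Apos i))) (Finvpair i)))"
      by (simp only: lsmul_lsmul rsmul_rsmul lsmul_rsmul[symmetric] opeq_refl)
    also have "opeq N n \<dots> (?ls (Fpair i) (?rs (\<lambda>a b. 0) (Finvpair i)))"
      by (intro lsmul_cong rsmul_cong opeq_refl IH)
    finally show ?thesis by simp
  qed
qed

lemma commutes_Mprod_low: "1 \<le> j \<Longrightarrow> j < i \<Longrightarrow> Suc i \<le> n \<Longrightarrow> commutes N n (emb [i, Suc i] X) (Mp j)"
proof (induction j)
  case 0 then show ?case by simp
next
  case (Suc j)
  show ?case
  proof (cases "j = 0")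
    case True then show ?thesis using commutes_Mbar_low[of 1 i X] Suc.prems by simp
  next
    case False
    then have j1: "1 \<le> j" by simp
    have "commutes N n (emb [i, Suc i] X) (mmul N n (Mp j) (Mb (Suc j)))"
      using Suc False by (intro commutes_mmul commutes_Mbar_low) auto
    then show ?thesis unfolding Mprod_Suc[OF j1] .
  qed
qed

lemma Spos_Mprod_Apos_zero_last:
  assumes k: "1 \<le> k" "Suc k \<le> n"
  shows "opeq N n (lsmul sm N n (Spos k) (rsmul sm N n (Mp (Suc k)) (Apos k))) (\<lambda>a b. 0)"
proof (cases "k = 1")
  case True
  have "Mp (Suc 1) = mmul N n (Mb 1) (Mb (Suc 1))" using Mprod_Suc[of 1] by (simp add: One_nat_def)
  then show ?thesis using Mbar_pair_half_quantum[of 1] k True by simp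
next
  case False
  let ?ls = "lsmul sm N n" and ?rs = "rsmul sm N n"
  let ?P = "mmul N n (Mb k) (Mb (Suc k))"
  have k2: "1 \<le> k - 1" "Suc (k - 1) = k" using k False by auto
  have "Mp k = mmul N n (Mp (k - 1)) (Mb k)"
    using Mprod_Suc[OF k2(1), of sm N n F Finv M] unfolding k2(2) .
  then have "Mp (Suc k) = mmul N n (Mp (k - 1)) ?P"
    by (simp only: Mprod_Suc[OF k(1)] mmul_assoc)
  then have "opeq N n (?ls (Spos k) (?rs (Mp (Suc k)) (Apos k)))
      (mmul N n (?ls (Spos k) (Mp (k - 1))) (?rs ?P (Apos k)))"
    by (simp only: mmul_lsmul mmul_rsmul lsmul_rsmul opeq_refl)
  also have "opeq N n \<dots> (mmul N n (?rs (Mp (k - 1)) (Spos k)) (?rs ?P (Apos k)))"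
    using commutes_Mprod_low[of "k - 1" k] k k2 unfolding commutes_def by (intro mmul_cong opeq_refl) auto
  also have "opeq N n \<dots> (mmul N n (Mp (k - 1)) (?ls (Spos k) (?rs ?P (Apos k))))"
    by (simp only: mmul_rsmul_lsmul opeq_refl)
  also have "opeq N n \<dots> (mmul N n (Mp (k - 1)) (\<lambda>a b. 0))"
    using k by (intro mmul_cong opeq_refl Mbar_pair_half_quantum) auto
  finally show ?thesis by simp
qed

lemma Spos_Mprod_Apos_zero_Suc:
  assumes i: "1 \<le> i" "i < k" and k: "Suc k \<le> n"
    and zero: "opeq N n (lsmul sm N n (Spos i) (rsmul sm N n (Mp k) (Apos i))) (\<lambda>a b. 0)"
  shows "opeq N n (lsmul sm N n (Spos i) (rsmul sm N n (Mp (Suc k)) (Apos i))) (\<lambda>a b. 0)"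
proof -
  let ?ls = "lsmul sm N n" and ?rs = "rsmul sm N n"
  have cA: "commutes N n (Apos i) (Mb (Suc k))"
    using i k by (intro commutes_Apos commutes_Rpos_Mbar_high) auto
  have "opeq N n (?ls (Spos i) (?rs (Mp (Suc k)) (Apos i))) (?ls (Spos i) (mmul N n (Mp k) (?rs (Mb (Suc k)) (Apos i))))"
    using i by (simp only: Mprod_Suc mmul_rsmul opeq_refl)
  also have "opeq N n \<dots> (?ls (Spos i) (mmul N n (Mp k) (?ls (Apos i) (Mb (Suc k)))))"
    using cA unfolding commutes_def by (intro lsmul_cong mmul_cong opeq_refl) (rule opeq_sym)
  also have "opeq N n \<dots> (mmul N n (?ls (Spos i) (?rs (Mp k) (Apos i))) (Mb (Suc k)))"
    by (simp only: mmul_lsmul mmul_rsmul_lsmul opeq_refl)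
  also have "opeq N n \<dots> (mmul N n (\<lambda>a b. 0) (Mb (Suc k)))"
    by (intro mmul_cong opeq_refl zero)
  finally show ?thesis by simp
qed

lemma Spos_Mprod_Apos_zero:
  "1 \<le> i \<Longrightarrow> i < k \<Longrightarrow> k \<le> n \<Longrightarrow>
   opeq N n (lsmul sm N n (Spos i) (rsmul sm N n (Mp k) (Apos i))) (\<lambda>a b. 0)"
proof (induction k)
  case 0 then show ?case by simp
next
  case (Suc k)
  show ?case
  proof (cases "i < k")
    case True
    then show ?thesis using Suc by (intro Spos_Mprod_Apos_zero_Suc) auto
  next
    case False
    then have "i = k" using Suc.prems by simp
    then show ?thesis using Suc.prems Spos_Mprod_Apos_zero_last[of k] by simp
  qed
qed

lemma Spos_Mprod_asym_zero:
  assumes i: "1 \<le> i" "i < n"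
  shows "opeq N n (lsmul sm N n (Spos i) (rsmul sm N n (Mp n) (asym N q R n))) (\<lambda>a b. 0)"
proof -
  let ?An = "asym N q R n"
  have "opeq N n (lsmul sm N n (Spos i) (rsmul sm N n (Mp n) ?An))
      (lsmul sm N n (Spos i) (rsmul sm N n (Mp n) (mmul N n (Apos i) ?An)))"
    by (intro lsmul_cong rsmul_cong opeq_refl opeq_sym[OF Apos_asym[OF i]])
  also have "opeq N n \<dots> (rsmul sm N n (lsmul sm N n (Spos i) (rsmul sm N n (Mp n) (Apos i))) ?An)"
    by (simp only: rsmul_rsmul[symmetric] lsmul_rsmul opeq_refl)
  also have "opeq N n \<dots> (rsmul sm N n (\<lambda>a b. 0) ?An)"
    by (intro rsmul_cong opeq_refl Spos_Mprod_Apos_zero) (use i in auto)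
  finally show ?thesis by simp
qed

end

section \<open>The rank-one antisymmetrizer\<close>

context cmodule
begin

lemma lsmul_scalar_multiple:
  assumes "opeq N m Y (\<lambda>a b. sm (C a b) d)"
  shows "opeq N m (lsmul sm N m D Y) (\<lambda>a b. sm (mmul N m D C a b) d)"
  using assms by (simp add: opeq_def lsmul_def mmul_def scale_sum_left)

lemma ptr_tail_scalar_multiple:
  assumes Y: "opeq N n Y (\<lambda>a b. sm (C a b) d)" and n: "1 \<le> n" and ij: "i < N" "j < N"
  shows "ptr N n {2..n} Y [i] [j] = sm (ptr N n {2..n} C [i] [j]) d"
proof -
  obtain k where k: "n = Suc k" using n by (cases n) auto
  have "ptr N n {2..n} Y [i] [j] = (\<Sum>c\<in>idx k N. sm (C (i # c) (j # c)) d)"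
    unfolding ptr_tail_entry[OF k] using ij by (intro sum.cong refl opeqD[OF Y]) (auto simp: k idx_Cons)
  then show ?thesis by (simp add: ptr_tail_entry[OF k] scale_sum_left)
qed

lemma rank_one_fixed_column:
  fixes A :: "complex op" and eu el :: "nat list \<Rightarrow> complex"
  assumes A: "\<forall>a\<in>idx m N. \<forall>b\<in>idx m N. A a b = eu a * el b"
    and el_eu: "(\<Sum>a\<in>idx m N. el a * eu a) = 1"
    and fixed: "opeq N m (lsmul sm N m A (rsmul sm N m X A)) (rsmul sm N m X A)"
    and a: "a \<in> idx m N"
  shows "(\<Sum>b\<in>idx m N. sm (eu b) (X a b)) = sm (eu a) (\<Sum>c\<in>idx m N. \<Sum>b\<in>idx m N. sm (el c * eu b) (X c b))"
proof -
  define v where "v c = (\<Sum>b\<in>idx m N. sm (eu b) (X c b))" for c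
  define det where "det = (\<Sum>c\<in>idx m N. sm (el c) (v c))"
  have XA: "rsmul sm N m X A c b = sm (el b) (v c)" if b: "b \<in> idx m N" for b c
    unfolding rsmul_def v_def scale_sum_right using A b
    by (intro sum.cong refl) (simp add: mult.commute)
  have row: "sm (el b) (v a) = sm (eu a * el b) det" if b: "b \<in> idx m N" for b
  proof -
    have "sm (el b) (v a) = (\<Sum>c\<in>idx m N. sm (A a c) (rsmul sm N m X A c b))"
      using opeqD[OF fixed a b] XA[OF b] by (simp add: lsmul_def)
    also have "\<dots> = (\<Sum>c\<in>idx m N. sm (eu a * el b) (sm (el c) (v c)))"
      using A a b XA by (intro sum.cong refl) (simp add: mult.commute mult.left_commute)
    finally show ?thesis by (simp add: det_def scale_sum_right)
  qed
  have "v a = sm (\<Sum>b\<in>idx m N. el b * eu b) (v a)" using el_eu by simp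
  also have "\<dots> = (\<Sum>b\<in>idx m N. sm (eu b) (sm (el b) (v a)))"
    by (simp add: scale_sum_left mult.commute)
  also have "\<dots> = (\<Sum>b\<in>idx m N. sm (eu a * (el b * eu b)) det)"
    using row by (intro sum.cong refl) (simp add: mult.commute mult.left_commute)
  also have "\<dots> = sm (eu a) det"
    using el_eu by (simp add: scale_sum_left[symmetric] sum_distrib_left[symmetric])
  finally show ?thesis by (simp add: v_def det_def scale_sum_right)
qed

lemma rank_one_fixed:
  fixes A :: "complex op" and eu el :: "nat list \<Rightarrow> complex"
  assumes A: "\<forall>a\<in>idx m N. \<forall>b\<in>idx m N. A a b = eu a * el b"
    and el_eu: "(\<Sum>a\<in>idx m N. el a * eu a) = 1"
    and fixed: "opeq N m (lsmul sm N m A (rsmul sm N m X A)) (rsmul sm N m X A)"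
  shows "opeq N m (rsmul sm N m X A)
           (\<lambda>a b. sm (A a b) (\<Sum>c\<in>idx m N. \<Sum>d\<in>idx m N. sm (el c * eu d) (X c d)))"
  unfolding opeq_def
proof (intro ballI)
  fix a b assume a: "a \<in> idx m N" and b: "b \<in> idx m N"
  have "rsmul sm N m X A a b = sm (el b) (\<Sum>d\<in>idx m N. sm (eu d) (X a d))"
    unfolding rsmul_def scale_sum_right using A b
    by (intro sum.cong refl) (simp add: mult.commute)
  then show "rsmul sm N m X A a b = sm (A a b) (\<Sum>c\<in>idx m N. \<Sum>d\<in>idx m N. sm (el c * eu d) (X c d))"
    using rank_one_fixed_column[OF A el_eu fixed a] A a b by (simp add: mult.commute)
qed

end

theorem mainTheorem3:
  fixes N n :: nat and q :: complex
    and R F Finv S2 A2 Psi :: "complex op"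
    and eu el :: "nat list \<Rightarrow> complex"
    and sm :: "complex \<Rightarrow> 'a::ring \<Rightarrow> 'a"
    and M :: "'a op"
  assumes alg: "calg sm"
    and q0: "q \<noteq> 0"
    and n1: "n \<ge> 1"
    \<comment> \<open>R, F automorphisms of V (x) V (Finv the inverse of F)\<close>
    and Rinv: "invertible_op N 2 R"
    and Finv1: "opeq N 2 (mmul N 2 F Finv) idop"
    and Finv2: "opeq N 2 (mmul N 2 Finv F) idop"
    \<comment> \<open>condition (i)\<close>
    and i1: "opeq N 3 (mmul N 3 (mmul N 3 (emb [1,2] R) (emb [2,3] R)) (emb [1,2] R))
                      (mmul N 3 (mmul N 3 (emb [2,3] R) (emb [1,2] R)) (emb [2,3] R))"
    and i2: "opeq N 3 (mmul N 3 (mmul N 3 (emb [1,2] F) (emb [2,3] F)) (emb [1,2] F))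
                      (mmul N 3 (mmul N 3 (emb [2,3] F) (emb [1,2] F)) (emb [2,3] F))"
    and i3: "opeq N 3 (mmul N 3 (mmul N 3 (emb [1,2] R) (emb [2,3] F)) (emb [1,2] F))
                      (mmul N 3 (mmul N 3 (emb [2,3] F) (emb [1,2] F)) (emb [2,3] R))"
    and i4: "opeq N 3 (mmul N 3 (mmul N 3 (emb [1,2] F) (emb [2,3] F)) (emb [1,2] R))
                      (mmul N 3 (mmul N 3 (emb [2,3] R) (emb [1,2] F)) (emb [2,3] F))"
    \<comment> \<open>condition (ii)\<close>
    and ii1: "qadm 2 q"
    and ii2: "opeq N 2 (mmul N 2 S2 S2) S2"
    and ii3: "opeq N 2 (mmul N 2 A2 A2) A2"
    and ii4: "opeq N 2 (\<lambda>a b. S2 a b + A2 a b) idop"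
    and ii5: "opeq N 2 R (\<lambda>a b. q * S2 a b - inverse q * A2 a b)"
    \<comment> \<open>condition (iii); rank A^(n) = 1 is expressed through the tensors epsilon\<close>
    and iii1: "qadm n q"
    and iii2: "\<forall>a\<in>idx n N. \<forall>b\<in>idx n N. asym N q R n a b = eu a * el b"
    and iii3: "(\<Sum>a\<in>idx n N. el a * eu a) = 1"
    and iii4: "opeq N (Suc n) (asym_step N q R n (asym N q R n)) (\<lambda>a b. 0)"
    \<comment> \<open>condition (iv)\<close>
    and iv1: "invertible_op N 2 Psi"
    and iv2: "opeq N 2 (ptr N 3 {2} (mmul N 3 (emb [1,2] Psi) (emb [2,3] F))) flip"
    \<comment> \<open>M is a half-quantum matrix\<close>
    and hq: "opeq N 2 (lsmul sm N 2 S2 (rsmul sm N 2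
                 (mmul N 2 (Mbar sm N 2 F Finv M 1) (Mbar sm N 2 F Finv M 2)) A2)) (\<lambda>a b. 0)"
  shows "let Mn = Mprod sm N n F Finv M n;
             detq = (\<Sum>a\<in>idx n N. \<Sum>b\<in>idx n N. sm (el a * eu b) (Mn a b));
             D = ptr N 2 {2} Psi;
             Dp = dprod N n D [2..<Suc n];
             An = asym N q R n;
             Mt = ptr N n {2..n} (lsmul sm N n Dp (rsmul sm N n Mn An));
             Dc = ptr N n {2..n} (mmul N n Dp An)
         in (\<forall>a\<in>idx n N. (\<Sum>b\<in>idx n N. sm (eu b) (Mn a b)) = sm (eu a) detq)
            \<and> (\<forall>i<N. \<forall>j<N. Mt [i] [j] = sm (Dc [i] [j]) detq)"
proof -
  \<comment> \<open>D_n.\<close>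
  interpret calgebra sm by (rule calgebra_calg[OF alg])
  interpret half_quantum N n q R S2 A2 sm F Finv M
    using q0 n1 ii1 ii2 ii4 ii5 i1 iii1 Finv1 Finv2 i2 i3 i4 hq by unfold_locales auto
  let ?An = "asym N q R n" and ?Mn = "Mprod sm N n F Finv M n"
  let ?detq = "\<Sum>a\<in>idx n N. \<Sum>b\<in>idx n N. sm (el a * eu b) (?Mn a b)"
  have fixed: "opeq N n (lsmul sm N n ?An (rsmul sm N n ?Mn ?An)) (rsmul sm N n ?Mn ?An)"
    by (rule asym_fixes_Spos_annihilated[OF Spos_Mprod_asym_zero])
  have "opeq N n (rsmul sm N n ?Mn ?An) (\<lambda>a b. sm (?An a b) ?detq)"
    by (rule rank_one_fixed[OF iii2 iii3 fixed])
  then have trace: "opeq N n (lsmul sm N n Dp (rsmul sm N n ?Mn ?An)) (\<lambda>a b. sm (mmul N n Dp ?An a b) ?detq)"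
    for Dp by (rule lsmul_scalar_multiple)
  show ?thesis unfolding Let_def
    by (intro conjI ballI allI impI rank_one_fixed_column[OF iii2 iii3 fixed]
        ptr_tail_scalar_multiple[OF trace n1])
qed

end
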